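(* Let $\lambda$ be a partition with $|\lambda|=n$. As an $\mathcal{A}_n$-module, $V_\lambda=\bigoplus_{T\in\mathrm{RYT}(\lambda)}U_T$, where $U_T=\mathrm{span}_{\mathbb{Q}(q,t)}\{F_\tau:\tau\in\mathrm{PSYT}(\lambda;T)\}$, and each $U_T$ is an irreducible $\mathcal{A}_n$-submodule.
   Context: All algebras over $\mathbb{Q}(q,t)$. $\mathcal{H}_n$: $T_1,\dots,T_{n-1}$, $(T_i-1)(T_i+t)=0$, braid relations. $\mathcal{A}_n$: $\mathcal{H}_n$ plus commuting invertible $\theta_1,\dots,\theta_n$, $\theta_{i+1}=tT_i^{-1}\theta_iT_i^{-1}$, $T_i\theta_j=\theta_jT_i$ ($j\notin\{i,i+1\}$); $\pi_n=t^{n-1}\theta_1T_1^{-1}\cdots T_{n-1}^{-1}$. $\mathcal{D}_n$: $\mathcal{A}_n$ plus commuting $X_i$, $X_{i+1}=tT_i^{-1}X_iT_i^{-1}$, $T_iX_j=X_jT_i$ ($j\notin\{i,i+1\}$), $\pi_nX_i\pi_n^{-1}=X_{i+1}$ ($i<n$), $\pi_nX_n\pi_n^{-1}=qX_1$. English notation, content $c(\square)=b-a$. $\mathrm{RYT}(\lambda)$: labellings $T:\lambda\to\mathbb{Z}_{\ge0}$ weakly decreasing along rows and down columns. $\mathrm{PSYT}(\lambda)$: labellings by $jq^b$ ($1\le j\le n$, $b\ge0$), each $j$ once, strictly increasing along rows and columns for $jq^m<kq^\ell$ iff $m>\ell$ or ($m=\ell$, $j<k$); $\mathrm{PSYT}(\lambda;T)$: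 those with $\tau(\square)=iq^{T(\square)}$ for every box. $c_\tau(i),w_\tau(i)$: content and exponent of the box with index $i$; $s_i(\tau)$ exchanges indices $i,i+1$ (if valid); $\Psi(\tau)$: $kq^a\mapsto(k-1)q^a$ ($k\ge2$), $1q^a\mapsto nq^{a+1}$; order generated by $\Psi(\tau)>\tau$, $s_i(\tau)>\tau$ if $w_\tau(i)<w_\tau(i+1)$ or ($w_\tau(i)=w_\tau(i+1)$ and $c_\tau(i)-c_\tau(i+1)>1$). $S_\lambda$: irreducible $\mathcal{H}_n$-module with basis $e_\tau$ ($\tau$ standard), $\bar\theta_ie_\tau=t^{c_\tau(i)}e_\tau$ ($\bar\theta_1=1$, $\bar\theta_{i+1}=tT_i^{-1}\bar\theta_iT_i^{-1}$), $(tT_i^{-1}\bar\theta_i-\bar\theta_itT_i^{-1})e_\tau=(t^{c_\tau(i)}-t^{c_\tau(i+1)})e_{s_i(\tau)}$ if $s_i(\tau)>\tau$, $T_ie_\tau=e_\tau$ / $-te_\tau$ for same row / column; $\mathcal{A}_n$-module via $T_i\mapsto T_i$, $\theta_1\mapsto1$; $V_\lambda=\mathcal{D}_n\otimes_{\mathcal{A}_n}S_\lambda$. $\{F_\tau\}_{\tau\in\mathrm{PSYT}(\lambda)}$ is the basis of $V_\lambda$ determined by $F_\tau=1\otimes e_\tau$ for standard $\tau$, $F_{s_i(\tau)}=\big(tT_i^{-1}+\frac{(t-1)q^{w_\tau(i+1)}t^{c_\tau(i+1)}}{q^{w_\tau(i)}t^{c_\tau(i)}-q^{w_\tau(i+1)}t^{c_\tau(i+1)}}\big)F_\tau$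 if $s_i(\tau)>\tau$, $F_{\Psi(\tau)}=q^{w_\tau(1)}X_n\pi_n^{-1}F_\tau$; it satisfies $\theta_iF_\tau=q^{w_\tau(i)}t^{c_\tau(i)}F_\tau$. *)

theory Defs
  imports "HOL-Computational_Algebra.Polynomial" "HOL-Computational_Algebra.Fraction_Field"
begin

type_synonym K = "rat poly poly fract"

text \<open>t is the inner indeterminate, q the outer one; both transcendental and independent.\<close>
definition tK :: K where "tK = Fract [:[:0, 1:]:] 1"
definition qK :: K where "qK = Fract [:0, 1:] 1"

section \<open>Partitions, boxes, tableaux (English notation, 0-indexed boxes (row, column))\<close>

definition is_partition :: "nat list \<Rightarrow> nat \<Rightarrow> bool" where
  "is_partition la n \<longleftrightarrow> sorted_wrt (\<ge>) la \<and> (\<forall>x\<in>set la. 0 < x) \<and> sum_list la = n"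

definition boxes :: "nat list \<Rightarrow> (nat \<times> nat) set" where
  "boxes la = {(a, b). a < length la \<and> b < la ! a}"

definition content :: "nat \<times> nat \<Rightarrow> int" where
  "content bx = int (snd bx) - int (fst bx)"

text \<open>A label (j, m) stands for j q^m.\<close>
definition lab_less :: "nat \<times> nat \<Rightarrow> nat \<times> nat \<Rightarrow> bool" where
  "lab_less x y \<longleftrightarrow> snd x > snd y \<or> (snd x = snd y \<and> fst x < fst y)"

definition RYT :: "nat list \<Rightarrow> (nat \<times> nat \<Rightarrow> nat) set" where
  "RYT la = {T. (\<forall>bx. bx \<notin> boxes la \<longrightarrow> T bx = 0)
     \<and> (\<forall>a b. (a, b) \<in> boxes la \<and> (a, b + 1) \<in> boxes la \<longrightarrow> T (a, b + 1) \<le> T (a, b))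
     \<and> (\<forall>a b. (a, b) \<in> boxes la \<and> (a + 1, b) \<in> boxes la \<longrightarrow> T (a + 1, b) \<le> T (a, b))}"

definition PSYT :: "nat \<Rightarrow> nat list \<Rightarrow> (nat \<times> nat \<Rightarrow> nat \<times> nat) set" where
  "PSYT n la = {\<tau>. (\<forall>bx. bx \<notin> boxes la \<longrightarrow> \<tau> bx = (0, 0))
     \<and> bij_betw (\<lambda>bx. fst (\<tau> bx)) (boxes la) {1..n}
     \<and> (\<forall>a b. (a, b) \<in> boxes la \<and> (a, b + 1) \<in> boxes la \<longrightarrow> lab_less (\<tau> (a, b)) (\<tau> (a, b + 1)))
     \<and> (\<forall>a b. (a, b) \<in> boxes la \<and> (a + 1, b) \<in> boxes la \<longrightarrow> lab_less (\<tau> (a, b)) (\<tau> (a + 1, b)))}"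

definition PSYT_T :: "nat \<Rightarrow> nat list \<Rightarrow> (nat \<times> nat \<Rightarrow> nat) \<Rightarrow> (nat \<times> nat \<Rightarrow> nat \<times> nat) set" where
  "PSYT_T n la T = {\<tau> \<in> PSYT n la. \<forall>bx \<in> boxes la. snd (\<tau> bx) = T bx}"

definition standard :: "nat \<Rightarrow> nat list \<Rightarrow> (nat \<times> nat \<Rightarrow> nat \<times> nat) \<Rightarrow> bool" where
  "standard n la \<tau> \<longleftrightarrow> \<tau> \<in> PSYT n la \<and> (\<forall>bx \<in> boxes la. snd (\<tau> bx) = 0)"

definition box_of :: "nat list \<Rightarrow> (nat \<times> nat \<Rightarrow> nat \<times> nat) \<Rightarrow> nat \<Rightarrow> nat \<times> nat" where
  "box_of la \<tau> i = (THE bx. bx \<in> boxes la \<and> fst (\<tau> bx) = i)"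

definition ctau :: "nat list \<Rightarrow> (nat \<times> nat \<Rightarrow> nat \<times> nat) \<Rightarrow> nat \<Rightarrow> int" where
  "ctau la \<tau> i = content (box_of la \<tau> i)"

definition wtau :: "nat list \<Rightarrow> (nat \<times> nat \<Rightarrow> nat \<times> nat) \<Rightarrow> nat \<Rightarrow> nat" where
  "wtau la \<tau> i = snd (\<tau> (box_of la \<tau> i))"

definition s_tab :: "nat \<Rightarrow> (nat \<times> nat \<Rightarrow> nat \<times> nat) \<Rightarrow> (nat \<times> nat \<Rightarrow> nat \<times> nat)" where
  "s_tab i \<tau> = (\<lambda>bx. if fst (\<tau> bx) = i then (i + 1, snd (\<tau> bx))
                     else if fst (\<tau> bx) = i + 1 then (i, snd (\<tau> bx)) else \<tau> bx)"

text \<open>Generating relation s_i(tau) > tau.\<close>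
definition s_up :: "nat list \<Rightarrow> (nat \<times> nat \<Rightarrow> nat \<times> nat) \<Rightarrow> nat \<Rightarrow> bool" where
  "s_up la \<tau> i \<longleftrightarrow> wtau la \<tau> i < wtau la \<tau> (i + 1)
     \<or> (wtau la \<tau> i = wtau la \<tau> (i + 1) \<and> ctau la \<tau> i - ctau la \<tau> (i + 1) > 1)"

definition Psi :: "nat \<Rightarrow> (nat \<times> nat \<Rightarrow> nat \<times> nat) \<Rightarrow> (nat \<times> nat \<Rightarrow> nat \<times> nat)" where
  "Psi n \<tau> = (\<lambda>bx. if fst (\<tau> bx) = 0 then \<tau> bx
                    else if 2 \<le> fst (\<tau> bx) then (fst (\<tau> bx) - 1, snd (\<tau> bx))
                    else (n, snd (\<tau> bx) + 1))"

definition Tinv :: "(nat \<Rightarrow> 'v \<Rightarrow> 'v) \<Rightarrow> nat \<Rightarrow> 'v \<Rightarrow> 'v" where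
  "Tinv Top i = inv (Top i)"

definition pi_op :: "(K \<Rightarrow> 'v \<Rightarrow> 'v) \<Rightarrow> nat \<Rightarrow> (nat \<Rightarrow> 'v \<Rightarrow> 'v) \<Rightarrow> (nat \<Rightarrow> 'v \<Rightarrow> 'v) \<Rightarrow> 'v \<Rightarrow> 'v" where
  "pi_op scale n Top th v = scale (tK ^ (n - 1)) (th 1 (foldr (\<lambda>i. Tinv Top i) [1..<n] v))"

definition D_module ::
  "(K \<Rightarrow> 'v::ab_group_add \<Rightarrow> 'v) \<Rightarrow> nat \<Rightarrow> (nat \<Rightarrow> 'v \<Rightarrow> 'v) \<Rightarrow> (nat \<Rightarrow> 'v \<Rightarrow> 'v) \<Rightarrow> (nat \<Rightarrow> 'v \<Rightarrow> 'v) \<Rightarrow> bool" where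
  "D_module scale n Top th X \<longleftrightarrow>
     vector_space scale
   \<and> (\<forall>i\<in>{1..<n}. Vector_Spaces.linear scale scale (Top i) \<and> bij (Top i))
   \<and> (\<forall>i\<in>{1..n}. Vector_Spaces.linear scale scale (th i) \<and> bij (th i))
   \<and> (\<forall>i\<in>{1..n}. Vector_Spaces.linear scale scale (X i))
   \<comment> \<open>Hecke relations\<close>
   \<and> (\<forall>i\<in>{1..<n}. \<forall>v. Top i (Top i v) + scale (tK - 1) (Top i v) - scale tK v = 0)
   \<and> (\<forall>i\<in>{1..<n}. \<forall>j\<in>{1..<n}. i + 1 = j \<longrightarrow> (\<forall>v. Top i (Top j (Top i v)) = Top j (Top i (Top j v))))
   \<and> (\<forall>i\<in>{1..<n}. \<forall>j\<in>{1..<n}. i + 2 \<le> j \<longrightarrow> (\<forall>v. Top i (Top j v) = Top j (Top i v)))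
   \<comment> \<open>affine Hecke relations\<close>
   \<and> (\<forall>i\<in>{1..n}. \<forall>j\<in>{1..n}. \<forall>v. th i (th j v) = th j (th i v))
   \<and> (\<forall>i\<in>{1..<n}. \<forall>v. th (i + 1) v = scale tK (Tinv Top i (th i (Tinv Top i v))))
   \<and> (\<forall>i\<in>{1..<n}. \<forall>j\<in>{1..n}. j \<noteq> i \<and> j \<noteq> i + 1 \<longrightarrow> (\<forall>v. Top i (th j v) = th j (Top i v)))
   \<comment> \<open>double affine relations\<close>
   \<and> (\<forall>i\<in>{1..n}. \<forall>j\<in>{1..n}. \<forall>v. X i (X j v) = X j (X i v))
   \<and> (\<forall>i\<in>{1..<n}. \<forall>v. X (i + 1) v = scale tK (Tinv Top i (X i (Tinv Top i v))))
   \<and> (\<forall>i\<in>{1..<n}. \<forall>j\<in>{1..n}. j \<noteq> i \<and> j \<noteq> i + 1 \<longrightarrow> (\<forall>v. Top i (X j v) = X j (Top i v)))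
   \<and> (\<forall>i\<in>{1..<n}. \<forall>v. pi_op scale n Top th (X i (inv (pi_op scale n Top th) v)) = X (i + 1) v)
   \<and> (\<forall>v. pi_op scale n Top th (X n (inv (pi_op scale n Top th) v)) = scale qK (X 1 v))"

text \<open>The data (V, T_i, theta_i, X_i, F) is the D_n-module V_lambda with its basis {F_tau}:
  F is a basis indexed by PSYT(lambda); for standard tau, F_tau = 1 \<otimes> e_tau where the e_tau
  satisfy the defining relations of S_lambda (with theta_1 acting by 1); F satisfies the
  recursions through s_i and Psi and the theta-eigenvalue property.\<close>
definition V_lambda_data ::
  "(K \<Rightarrow> 'v::ab_group_add \<Rightarrow> 'v) \<Rightarrow> nat \<Rightarrow> nat list \<Rightarrow> (nat \<Rightarrow> 'v \<Rightarrow> 'v) \<Rightarrow> (nat \<Rightarrow> 'v \<Rightarrow> 'v)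
     \<Rightarrow> (nat \<Rightarrow> 'v \<Rightarrow> 'v) \<Rightarrow> ((nat \<times> nat \<Rightarrow> nat \<times> nat) \<Rightarrow> 'v) \<Rightarrow> bool" where
  "V_lambda_data scale n la Top th X F \<longleftrightarrow>
     D_module scale n Top th X
   \<comment> \<open>F is a basis of V indexed by PSYT(lambda)\<close>
   \<and> inj_on F (PSYT n la)
   \<and> \<not> module.dependent scale (F ` PSYT n la)
   \<and> module.span scale (F ` PSYT n la) = UNIV
   \<comment> \<open>standard tableaux: F_tau = 1 \<otimes> e_tau, the S_lambda relations\<close>
   \<and> (\<forall>\<tau>. standard n la \<tau> \<longrightarrow> th 1 (F \<tau>) = F \<tau>)
   \<and> (\<forall>\<tau> i. standard n la \<tau> \<and> i \<in> {1..n} \<longrightarrow> th i (F \<tau>) = scale (tK powi ctau la \<tau> i) (F \<tau>))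
   \<and> (\<forall>\<tau> i. standard n la \<tau> \<and> i \<in> {1..<n} \<and> fst (box_of la \<tau> i) = fst (box_of la \<tau> (i + 1))
        \<longrightarrow> Top i (F \<tau>) = F \<tau>)
   \<and> (\<forall>\<tau> i. standard n la \<tau> \<and> i \<in> {1..<n} \<and> snd (box_of la \<tau> i) = snd (box_of la \<tau> (i + 1))
        \<longrightarrow> Top i (F \<tau>) = scale (- tK) (F \<tau>))
   \<and> (\<forall>\<tau> i. standard n la \<tau> \<and> i \<in> {1..<n} \<and> s_tab i \<tau> \<in> PSYT n la \<and> s_up la \<tau> i
        \<longrightarrow> scale tK (Tinv Top i (th i (F \<tau>))) - th i (scale tK (Tinv Top i (F \<tau>)))
            = scale (tK powi ctau la \<tau> i - tK powi ctau la \<tau> (i + 1)) (F (s_tab i \<tau>)))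
   \<comment> \<open>recursion through s_i\<close>
   \<and> (\<forall>\<tau> i. \<tau> \<in> PSYT n la \<and> i \<in> {1..<n} \<and> s_tab i \<tau> \<in> PSYT n la \<and> s_up la \<tau> i
        \<longrightarrow> F (s_tab i \<tau>) = scale tK (Tinv Top i (F \<tau>))
              + scale ((tK - 1) * qK ^ wtau la \<tau> (i + 1) * tK powi ctau la \<tau> (i + 1)
                  / (qK ^ wtau la \<tau> i * tK powi ctau la \<tau> i
                     - qK ^ wtau la \<tau> (i + 1) * tK powi ctau la \<tau> (i + 1))) (F \<tau>))
   \<comment> \<open>recursion through Psi\<close>
   \<and> (\<forall>\<tau>. \<tau> \<in> PSYT n la \<longrightarrow>
        F (Psi n \<tau>) = scale (qK ^ wtau la \<tau> 1) (X n (inv (pi_op scale n Top th) (F \<tau>))))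
   \<comment> \<open>theta-eigenvalues\<close>
   \<and> (\<forall>\<tau> i. \<tau> \<in> PSYT n la \<and> i \<in> {1..n} \<longrightarrow>
        th i (F \<tau>) = scale (qK ^ wtau la \<tau> i * tK powi ctau la \<tau> i) (F \<tau>))"

definition An_stable :: "nat \<Rightarrow> (nat \<Rightarrow> 'v \<Rightarrow> 'v) \<Rightarrow> (nat \<Rightarrow> 'v \<Rightarrow> 'v) \<Rightarrow> 'v set \<Rightarrow> bool" where
  "An_stable n Top th W \<longleftrightarrow>
     (\<forall>i\<in>{1..<n}. Top i ` W \<subseteq> W \<and> Tinv Top i ` W \<subseteq> W)
   \<and> (\<forall>i\<in>{1..n}. th i ` W \<subseteq> W \<and> inv (th i) ` W \<subseteq> W)"

definition An_submodule ::
  "(K \<Rightarrow> 'v::ab_group_add \<Rightarrow> 'v) \<Rightarrow> nat \<Rightarrow> (nat \<Rightarrow> 'v \<Rightarrow> 'v) \<Rightarrow> (nat \<Rightarrow> 'v \<Rightarrow> 'v) \<Rightarrow> 'v set \<Rightarrow> bool" where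
  "An_submodule scale n Top th W \<longleftrightarrow> module.subspace scale W \<and> An_stable n Top th W"

definition An_irreducible ::
  "(K \<Rightarrow> 'v::ab_group_add \<Rightarrow> 'v) \<Rightarrow> nat \<Rightarrow> (nat \<Rightarrow> 'v \<Rightarrow> 'v) \<Rightarrow> (nat \<Rightarrow> 'v \<Rightarrow> 'v) \<Rightarrow> 'v set \<Rightarrow> bool" where
  "An_irreducible scale n Top th W \<longleftrightarrow>
     An_submodule scale n Top th W \<and> W \<noteq> {0}
   \<and> (\<forall>W'. An_submodule scale n Top th W' \<and> W' \<subseteq> W \<longrightarrow> W' = {0} \<or> W' = W)"

definition U_T :: "(K \<Rightarrow> 'v::ab_group_add \<Rightarrow> 'v) \<Rightarrow> nat \<Rightarrow> nat list \<Rightarrow> ((nat \<times> nat \<Rightarrow> nat \<times> nat) \<Rightarrow> 'v)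
     \<Rightarrow> (nat \<times> nat \<Rightarrow> nat) \<Rightarrow> 'v set" where
  "U_T scale n la F T = module.span scale (F ` PSYT_T n la T)"

definition internal_direct_sum ::
  "(K \<Rightarrow> 'v::ab_group_add \<Rightarrow> 'v) \<Rightarrow> 'i set \<Rightarrow> ('i \<Rightarrow> 'v set) \<Rightarrow> 'v set \<Rightarrow> bool" where
  "internal_direct_sum scale I U V \<longleftrightarrow>
     module.span scale (\<Union>i\<in>I. U i) = V
   \<and> (\<forall>J u. finite J \<and> J \<subseteq> I \<and> (\<forall>j\<in>J. u j \<in> U j) \<and> (\<Sum>j\<in>J. u j) = 0 \<longrightarrow> (\<forall>j\<in>J. u j = 0))"

end

(*
  The theta_i act diagonally on the basis F_tau, with eigenvalue q^(w_tau(i)) t^(c_tau(i)), and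
  these eigenvalue tuples separate tableaux: a tableau increases along every diagonal of lambda,
  so on a diagonal it is recovered from the multiset of labels it places there. Hence every
  nonzero A_n-submodule of U_T contains some F_sigma. Besides F_tau itself, T_i F_tau involves
  only tableaux whose eigenvalue tuple is that of tau permuted by s_i; the same diagonal argument
  shows that they carry the q-exponents of tau box by box, so U_T is A_n-stable.
  The intertwiner recursion for F_(s_i tau) can be inverted: when s_i(tau) > tau the coefficient
  of F_tau in T_i F_(s_i tau) - c F_(s_i tau) is (x - t y)(t x - y)/(x - y)^2, which does not
  vanish.
  As PSYT(lambda;T) is connected under the swaps s_i (repeatedly remove an adjacent inversion
  relative to a fixed tableau), a submodule containing one F_sigma is all of U_T.
  Finally PSYT(lambda) is the disjoint union of the PSYT(lambda;T), whence the direct sum.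
*)

theory Submission
  imports
    Defs "HOL-Library.Product_Lexorder" "HOL-Library.Multiset" "HOL-Combinatorics.Transposition"
begin

lemma mono_on_eq_if_image_mset_eq:
  fixes f g :: "'a::linorder \<Rightarrow> 'b::linorder"
  assumes "finite A" "mono_on A f" "mono_on A g"
    and "image_mset f (mset_set A) = image_mset g (mset_set A)" and "x \<in> A"
  shows "f x = g x"
proof -
  define xs where "xs = sorted_list_of_set A"
  have set_xs: "set xs = A" and mset_xs: "mset xs = mset_set A"
    using assms(1) by (simp_all add: xs_def mset_set_set[symmetric])
  have sorted_map_mono: "sorted (map h xs)" if "mono_on A h" for h :: "'a \<Rightarrow> 'b"
    unfolding sorted_map
    by (rule sorted_wrt_mono_rel[of _ "(\<le>)"]) (use that set_xs in \<open>auto simp: xs_def mono_on_def\<close>)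
  have "map f xs = sort (map g xs)"
    by (rule properties_for_sort[symmetric]) (use assms(2,4) sorted_map_mono mset_xs in simp_all)
  also have "\<dots> = map g xs" using sorted_map_mono[OF assms(3)] by (rule sorted_sort_id)
  finally show ?thesis using assms(5) set_xs by simp
qed

lemma image_mset_mset_set_bij_betw:
  assumes "bij_betw \<pi> A B" and "\<And>a. a \<in> A \<Longrightarrow> f a = g (\<pi> a)"
  shows "image_mset f (mset_set A) = image_mset g (mset_set B)"
proof (cases "finite A")
  case True
  hence "image_mset f (mset_set A) = image_mset (\<lambda>a. g (\<pi> a)) (mset_set A)"
    using assms(2) by (intro image_mset_cong) simp
  also have "\<dots> = image_mset g (image_mset \<pi> (mset_set A))" by (simp add: multiset.map_comp o_def)
  also have "image_mset \<pi> (mset_set A) = mset_set B"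
    using assms(1) by (simp add: image_mset_mset_set bij_betw_def)
  finally show ?thesis .
qed (use bij_betw_finite[OF assms(1)] in simp)

section \<open>Young diagrams and their labellings\<close>

lemma boxes_eq_Sigma: "boxes la = (SIGMA a:{..<length la}. {..<la ! a})"
  by (auto simp: boxes_def)

lemma finite_boxes: "finite (boxes la)"
  by (simp add: boxes_eq_Sigma)

lemma card_boxes: "is_partition la n \<Longrightarrow> card (boxes la) = n"
  by (simp add: boxes_eq_Sigma card_SigmaI sum_list_sum_nth atLeast0LessThan is_partition_def)

lemma boxes_downward_closed:
  assumes "is_partition la n" "y \<in> boxes la" "fst x \<le> fst y" "snd x \<le> snd y"
  shows "x \<in> boxes la"
proof -
  have "la ! fst y \<le> la ! fst x"
    using assms sorted_wrt_nth_less[of "(\<ge>)" la "fst x" "fst y"]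
    by (cases "fst x = fst y") (auto simp: is_partition_def boxes_def)
  thus ?thesis using assms(2-4) by (auto simp: boxes_def)
qed

definition labkey :: "nat \<times> nat \<Rightarrow> int \<times> nat" where
  "labkey x = (- int (snd x), fst x)"

lemma lab_less_iff_labkey_less: "lab_less x y \<longleftrightarrow> labkey x < labkey y"
  by (auto simp: lab_less_def labkey_def less_prod_def)

lemma inj_labkey: "inj labkey"
  by (auto simp: inj_def labkey_def prod_eq_iff)

lemma lab_less_trans: "lab_less x y \<Longrightarrow> lab_less y z \<Longrightarrow> lab_less x z"
  by (simp add: lab_less_iff_labkey_less)

lemma PSYT_D:
  assumes "\<tau> \<in> PSYT n la"
  shows "\<And>x. x \<notin> boxes la \<Longrightarrow> \<tau> x = (0, 0)"
    and "bij_betw (\<lambda>x. fst (\<tau> x)) (boxes la) {1..n}"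
    and "\<And>a b. (a, b) \<in> boxes la \<Longrightarrow> (a, b + 1) \<in> boxes la \<Longrightarrow> lab_less (\<tau> (a, b)) (\<tau> (a, b + 1))"
    and "\<And>a b. (a, b) \<in> boxes la \<Longrightarrow> (a + 1, b) \<in> boxes la \<Longrightarrow> lab_less (\<tau> (a, b)) (\<tau> (a + 1, b))"
  using assms by (auto simp: PSYT_def)

lemma PSYT_lab_less_mono:
  assumes part: "is_partition la n" and \<tau>: "\<tau> \<in> PSYT n la" and y: "y \<in> boxes la"
  shows "fst x \<le> fst y \<Longrightarrow> snd x \<le> snd y \<Longrightarrow> x \<noteq> y \<Longrightarrow> lab_less (\<tau> x) (\<tau> y)"
proof (induction "fst y + snd y - (fst x + snd x)" arbitrary: x rule: less_induct)
  case (less x)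
  obtain a b where x: "x = (a, b)" by (cases x)
  define x' where "x' = (if a < fst y then (a + 1, b) else (a, b + 1))"
  have "a \<noteq> fst y \<or> b \<noteq> snd y" using less.prems(3) x by (cases y) auto
  hence x'_le: "fst x' \<le> fst y" "snd x' \<le> snd y"
    using less.prems(1,2) x by (auto simp: x'_def)
  have x'_box: "x' \<in> boxes la" and x_box: "x \<in> boxes la"
    using boxes_downward_closed[OF part y] x'_le less.prems(1,2) by auto
  have step: "lab_less (\<tau> x) (\<tau> x')"
    using PSYT_D(3,4)[OF \<tau>] x_box x'_box unfolding x x'_def by (cases "a < fst y") simp_all
  show ?case
  proof (cases "x' = y")
    case False
    have "fst x' + snd x' = fst x + snd x + 1" by (simp add: x'_def x)
    hence "lab_less (\<tau> x') (\<tau> y)" using less.hyps[OF _ x'_le False] x'_le by linarith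
    thus ?thesis using step lab_less_trans by blast
  qed (use step in simp)
qed

lemma PSYT_fst_in_range: "\<tau> \<in> PSYT n la \<Longrightarrow> x \<in> boxes la \<Longrightarrow> fst (\<tau> x) \<in> {1..n}"
  using bij_betwE[OF PSYT_D(2)] by blast

lemma PSYT_fst_inj:
  "\<tau> \<in> PSYT n la \<Longrightarrow> x \<in> boxes la \<Longrightarrow> y \<in> boxes la \<Longrightarrow> fst (\<tau> x) = fst (\<tau> y) \<Longrightarrow> x = y"
  using PSYT_D(2) unfolding bij_betw_def inj_on_def by blast

lemma box_of_fst:
  assumes "\<tau> \<in> PSYT n la" "x \<in> boxes la"
  shows "box_of la \<tau> (fst (\<tau> x)) = x"
  unfolding box_of_def using assms PSYT_fst_inj by (intro the_equality) auto

lemma box_of_spec: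
  assumes "\<tau> \<in> PSYT n la" "k \<in> {1..n}"
  shows "box_of la \<tau> k \<in> boxes la" and "fst (\<tau> (box_of la \<tau> k)) = k"
proof -
  obtain x where "x \<in> boxes la" "fst (\<tau> x) = k"
    using PSYT_D(2)[OF assms(1)] assms(2) unfolding bij_betw_def by (metis imageE)
  thus "box_of la \<tau> k \<in> boxes la" "fst (\<tau> (box_of la \<tau> k)) = k"
    using box_of_fst[OF assms(1)] by metis+
qed

lemma bij_betw_box_of:
  assumes "\<tau> \<in> PSYT n la" shows "bij_betw (box_of la \<tau>) {1..n} (boxes la)"
proof (rule bij_betw_byWitness[where f' = "\<lambda>x. fst (\<tau> x)"])
  show "\<forall>k\<in>{1..n}. fst (\<tau> (box_of la \<tau> k)) = k" using box_of_spec(2)[OF assms] by blast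
  show "\<forall>x\<in>boxes la. box_of la \<tau> (fst (\<tau> x)) = x" using box_of_fst[OF assms] by blast
  show "box_of la \<tau> ` {1..n} \<subseteq> boxes la" using box_of_spec(1)[OF assms] by blast
  show "(\<lambda>x. fst (\<tau> x)) ` boxes la \<subseteq> {1..n}" using PSYT_fst_in_range[OF assms] by blast
qed

lemma PSYT_at_box_of: "\<tau> \<in> PSYT n la \<Longrightarrow> k \<in> {1..n} \<Longrightarrow> \<tau> (box_of la \<tau> k) = (k, wtau la \<tau> k)"
  by (simp add: wtau_def prod_eq_iff box_of_spec)

definition diagonal :: "nat list \<Rightarrow> int \<Rightarrow> (nat \<times> nat) set" where
  "diagonal la d = {x \<in> boxes la. content x = d}"

lemma finite_diagonal: "finite (diagonal la d)"
  using finite_boxes by (simp add: diagonal_def)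

lemma mono_on_labkey_PSYT_diagonal:
  assumes "is_partition la n" "\<tau> \<in> PSYT n la"
  shows "mono_on (diagonal la d) (\<lambda>x. labkey (\<tau> x))"
proof (rule mono_onI)
  fix x y assume xy: "x \<in> diagonal la d" "y \<in> diagonal la d" "x \<le> y"
  show "labkey (\<tau> x) \<le> labkey (\<tau> y)"
  proof (cases "x = y")
    case False
    have "fst x \<le> fst y \<and> snd x \<le> snd y"
      using xy by (cases x; cases y) (auto simp: diagonal_def content_def less_eq_prod_def)
    thus ?thesis using PSYT_lab_less_mono[OF assms, of y x] xy False
      by (auto simp: diagonal_def lab_less_iff_labkey_less)
  qed simp
qed

lemma mono_on_snd_PSYT_diagonal:
  assumes "is_partition la n" "\<tau> \<in> PSYT n la"
  shows "mono_on (diagonal la d) (\<lambda>x. - int (snd (\<tau> x)))"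
  using mono_on_labkey_PSYT_diagonal[OF assms]
  unfolding mono_on_def labkey_def less_eq_prod_def by fastforce

lemma image_mset_PSYT_diagonal:
  assumes "\<tau> \<in> PSYT n la"
  shows "image_mset \<tau> (mset_set (diagonal la d))
       = image_mset (\<lambda>k. (k, wtau la \<tau> k)) (mset_set {k \<in> {1..n}. ctau la \<tau> k = d})"
proof -
  let ?K = "{k \<in> {1..n}. ctau la \<tau> k = d}"
  have bij: "bij_betw (box_of la \<tau>) {1..n} (boxes la)" by (rule bij_betw_box_of[OF assms])
  have "diagonal la d = box_of la \<tau> ` ?K"
  proof (intro equalityI subsetI)
    fix x assume "x \<in> diagonal la d"
    hence x: "x \<in> boxes la" "content x = d" by (simp_all add: diagonal_def)
    have "fst (\<tau> x) \<in> ?K"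
      using x box_of_fst[OF assms x(1)] PSYT_fst_in_range[OF assms x(1)] by (simp add: ctau_def)
    thus "x \<in> box_of la \<tau> ` ?K" using box_of_fst[OF assms x(1)] by (metis image_eqI)
  qed (use box_of_spec(1)[OF assms] in \<open>auto simp: diagonal_def ctau_def\<close>)
  moreover have "inj_on (box_of la \<tau>) ?K"
    using bij unfolding bij_betw_def by (rule inj_on_subset[OF conjunct1]) auto
  ultimately have "bij_betw (box_of la \<tau>) ?K (diagonal la d)" by (simp add: bij_betw_def)
  thus ?thesis
    by (rule image_mset_mset_set_bij_betw[symmetric]) (simp add: PSYT_at_box_of[OF assms])
qed

lemma PSYT_eq_if_same_weights:
  assumes part: "is_partition la n" and \<sigma>: "\<sigma> \<in> PSYT n la" and \<rho>: "\<rho> \<in> PSYT n la"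
    and same: "\<forall>k\<in>{1..n}. ctau la \<sigma> k = ctau la \<rho> k \<and> wtau la \<sigma> k = wtau la \<rho> k"
  shows "\<sigma> = \<rho>"
proof
  fix x
  show "\<sigma> x = \<rho> x"
  proof (cases "x \<in> boxes la")
    case True
    let ?D = "diagonal la (content x)"
    have K: "{k \<in> {1..n}. ctau la \<sigma> k = content x} = {k \<in> {1..n}. ctau la \<rho> k = content x}"
      using same by auto
    have "image_mset \<sigma> (mset_set ?D) = image_mset \<rho> (mset_set ?D)"
      unfolding image_mset_PSYT_diagonal[OF \<sigma>] image_mset_PSYT_diagonal[OF \<rho>] K
      using same by (intro image_mset_cong) simp
    from arg_cong[OF this, of "image_mset labkey"]
    have "image_mset (\<lambda>y. labkey (\<sigma> y)) (mset_set ?D) = image_mset (\<lambda>y. labkey (\<rho> y)) (mset_set ?D)"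
      by (simp add: multiset.map_comp o_def)
    hence "labkey (\<sigma> x) = labkey (\<rho> x)"
      using mono_on_eq_if_image_mset_eq[OF finite_diagonal mono_on_labkey_PSYT_diagonal[OF part \<sigma>]
          mono_on_labkey_PSYT_diagonal[OF part \<rho>]] True
      by (simp add: diagonal_def)
    thus ?thesis using inj_labkey by (simp add: inj_eq)
  qed (simp add: PSYT_D(1)[OF \<sigma>] PSYT_D(1)[OF \<rho>])
qed

lemma PSYT_snd_eq_if_permuted_weights:
  assumes part: "is_partition la n" and \<sigma>: "\<sigma> \<in> PSYT n la" and \<tau>: "\<tau> \<in> PSYT n la"
    and \<pi>: "bij_betw \<pi> {1..n} {1..n}"
    and perm: "\<forall>k\<in>{1..n}. ctau la \<sigma> k = ctau la \<tau> (\<pi> k) \<and> wtau la \<sigma> k = wtau la \<tau> (\<pi> k)"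
    and x: "x \<in> boxes la"
  shows "snd (\<sigma> x) = snd (\<tau> x)"
proof -
  let ?D = "diagonal la (content x)"
  let ?K = "\<lambda>\<rho>. {k \<in> {1..n}. ctau la \<rho> k = content x}"
  have snd_diagonal: "image_mset (\<lambda>y. - int (snd (\<rho> y))) (mset_set ?D)
      = image_mset (\<lambda>k. - int (wtau la \<rho> k)) (mset_set (?K \<rho>))" if "\<rho> \<in> PSYT n la" for \<rho>
    using arg_cong[OF image_mset_PSYT_diagonal[OF that], of "image_mset (\<lambda>p. - int (snd p))"]
    by (simp add: multiset.map_comp o_def)
  have "\<pi> ` ?K \<sigma> = ?K \<tau>"
  proof (intro equalityI subsetI)
    fix j assume "j \<in> \<pi> ` ?K \<sigma>"
    then obtain k where "k \<in> ?K \<sigma>" "j = \<pi> k" by blast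
    thus "j \<in> ?K \<tau>" using perm bij_betwE[OF \<pi>] by auto
  next
    fix j assume j: "j \<in> ?K \<tau>"
    then obtain k where "k \<in> {1..n}" "j = \<pi> k" using bij_betw_imp_surj_on[OF \<pi>] by blast
    thus "j \<in> \<pi> ` ?K \<sigma>" using perm j by auto
  qed
  moreover have "inj_on \<pi> (?K \<sigma>)"
    using bij_betw_imp_inj_on[OF \<pi>] by (rule inj_on_subset) blast
  ultimately have "image_mset (\<lambda>k. - int (wtau la \<sigma> k)) (mset_set (?K \<sigma>))
      = image_mset (\<lambda>k. - int (wtau la \<tau> k)) (mset_set (?K \<tau>))"
    using perm by (intro image_mset_mset_set_bij_betw[where \<pi> = \<pi>]) (auto simp: bij_betw_def)
  hence "image_mset (\<lambda>y. - int (snd (\<sigma> y))) (mset_set ?D)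
      = image_mset (\<lambda>y. - int (snd (\<tau> y))) (mset_set ?D)"
    by (simp add: snd_diagonal[OF \<sigma>] snd_diagonal[OF \<tau>])
  hence "- int (snd (\<sigma> x)) = - int (snd (\<tau> x))"
    using mono_on_eq_if_image_mset_eq[OF finite_diagonal mono_on_snd_PSYT_diagonal[OF part \<sigma>]
        mono_on_snd_PSYT_diagonal[OF part \<tau>]] x
    by (simp add: diagonal_def)
  thus ?thesis by simp
qed

section \<open>The swaps s_i\<close>

lemma s_tab_apply: "s_tab i \<tau> x = (transpose i (i + 1) (fst (\<tau> x)), snd (\<tau> x))"
  by (simp add: s_tab_def transpose_def)

lemma s_tab_s_tab: "s_tab i (s_tab i \<tau>) = \<tau>"
  by (simp add: fun_eq_iff s_tab_apply)

lemma bij_betw_transpose_Suc: "i \<in> {1..<n::nat} \<Longrightarrow> bij_betw (transpose i (i + 1)) {1..n} {1..n}"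
  by (intro bij_betw_transpose_iff) auto

lemma box_of_s_tab:
  assumes \<tau>: "\<tau> \<in> PSYT n la" and \<tau>': "s_tab i \<tau> \<in> PSYT n la"
    and i: "i \<in> {1..<n}" and k: "k \<in> {1..n}"
  shows "box_of la (s_tab i \<tau>) k = box_of la \<tau> (transpose i (i + 1) k)"
proof -
  let ?x = "box_of la \<tau> (transpose i (i + 1) k)"
  have "transpose i (i + 1) k \<in> {1..n}" using bij_betwE[OF bij_betw_transpose_Suc[OF i]] k by blast
  hence "?x \<in> boxes la" "fst (s_tab i \<tau> ?x) = k"
    using box_of_spec[OF \<tau>] by (simp_all add: s_tab_apply)
  thus ?thesis using box_of_fst[OF \<tau>'] by metis
qed

lemma weights_s_tab:
  assumes "\<tau> \<in> PSYT n la" "s_tab i \<tau> \<in> PSYT n la" "i \<in> {1..<n}" "k \<in> {1..n}"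
  shows "wtau la (s_tab i \<tau>) k = wtau la \<tau> (transpose i (i + 1) k)"
    and "ctau la (s_tab i \<tau>) k = ctau la \<tau> (transpose i (i + 1) k)"
  using box_of_s_tab[OF assms] by (simp_all add: wtau_def ctau_def s_tab_apply)

lemma s_up_or_s_up_s_tab:
  assumes part: "is_partition la n" and \<tau>: "\<tau> \<in> PSYT n la" and \<tau>': "s_tab i \<tau> \<in> PSYT n la"
    and i: "i \<in> {1..<n}"
  shows "s_up la \<tau> i \<or> s_up la (s_tab i \<tau>) i"
proof (rule ccontr)
  assume neither: "\<not> (s_up la \<tau> i \<or> s_up la (s_tab i \<tau>) i)"
  have i1: "i \<in> {1..n}" "i + 1 \<in> {1..n}" using i by auto
  define x where "x = box_of la \<tau> i"
  define y where "y = box_of la \<tau> (i + 1)"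
  have x: "x \<in> boxes la" "fst (\<tau> x) = i" using box_of_spec[OF \<tau> i1(1)] by (simp_all add: x_def)
  have y: "y \<in> boxes la" "fst (\<tau> y) = i + 1" using box_of_spec[OF \<tau> i1(2)] by (simp_all add: y_def)
  have "wtau la (s_tab i \<tau>) i = snd (\<tau> y)" "wtau la (s_tab i \<tau>) (i + 1) = snd (\<tau> x)"
    "ctau la (s_tab i \<tau>) i = content y" "ctau la (s_tab i \<tau>) (i + 1) = content x"
    using weights_s_tab[OF \<tau> \<tau>' i i1(1)] weights_s_tab[OF \<tau> \<tau>' i i1(2)]
    by (simp_all add: wtau_def ctau_def x_def y_def)
  hence same_snd: "snd (\<tau> x) = snd (\<tau> y)" and near: "\<bar>content x - content y\<bar> \<le> 1"
    using neither by (auto simp: s_up_def wtau_def ctau_def x_def y_def)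
  have "\<not> (fst y \<le> fst x \<and> snd y \<le> snd x)"
  proof
    assume "fst y \<le> fst x \<and> snd y \<le> snd x"
    hence "lab_less (\<tau> y) (\<tau> x)" using PSYT_lab_less_mono[OF part \<tau> x(1)] x y by fastforce
    thus False using x y same_snd by (simp add: lab_less_def)
  qed
  moreover have "\<not> (fst x \<le> fst y \<and> snd x \<le> snd y)"
  proof
    assume "fst x \<le> fst y \<and> snd x \<le> snd y"
    hence "lab_less (s_tab i \<tau> x) (s_tab i \<tau> y)"
      using PSYT_lab_less_mono[OF part \<tau>' y(1)] x y by fastforce
    thus False using x y same_snd by (simp add: lab_less_def s_tab_apply)
  qed
  \<comment> \<open>boxes on equal or adjacent diagonals are comparable componentwise\<close>
  ultimately show False using near by (cases x, cases y) (auto simp: content_def)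
qed

section \<open>The sets PSYT(lambda;T)\<close>

definition inversions ::
  "nat list \<Rightarrow> (nat \<times> nat \<Rightarrow> nat \<times> nat) \<Rightarrow> (nat \<times> nat \<Rightarrow> nat \<times> nat) \<Rightarrow> ((nat \<times> nat) \<times> (nat \<times> nat)) set"
where
  "inversions la \<sigma> \<tau> =
     {(x, y) \<in> boxes la \<times> boxes la. fst (\<tau> x) < fst (\<tau> y) \<and> fst (\<sigma> y) < fst (\<sigma> x)}"

lemma finite_inversions: "finite (inversions la \<sigma> \<tau>)"
  by (rule finite_subset[of _ "boxes la \<times> boxes la"]) (auto simp: inversions_def finite_boxes)

lemma PSYT_T_subset: "PSYT_T n la T \<subseteq> PSYT n la"
  by (auto simp: PSYT_T_def)

lemma PSYT_T_eq_if_no_inversions: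
  assumes \<sigma>: "\<sigma> \<in> PSYT_T n la T" and \<tau>: "\<tau> \<in> PSYT_T n la T" and none: "inversions la \<sigma> \<tau> = {}"
  shows "\<tau> = \<sigma>"
proof -
  have \<sigma>': "\<sigma> \<in> PSYT n la" and \<tau>': "\<tau> \<in> PSYT n la" using \<sigma> \<tau> by (simp_all add: PSYT_T_def)
  define f where "f = (\<lambda>k. fst (\<sigma> (box_of la \<tau> k)))"
  have bij: "bij_betw f {1..n} {1..n}"
    using bij_betw_trans[OF bij_betw_box_of[OF \<tau>'] PSYT_D(2)[OF \<sigma>']] by (simp add: f_def o_def)
  have mono_f: "mono_on {1..n} f"
  proof (rule mono_onI)
    fix k k' assume kk': "k \<in> {1..n}" "k' \<in> {1..n}" "k \<le> k'"
    show "f k \<le> f k'"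
    proof (cases "k = k'")
      case False
      let ?x = "box_of la \<tau> k" and ?y = "box_of la \<tau> k'"
      have "fst (\<tau> ?x) < fst (\<tau> ?y)" using kk' False box_of_spec(2)[OF \<tau>'] by simp
      moreover have "(?x, ?y) \<notin> inversions la \<sigma> \<tau>" using none by simp
      ultimately have "\<not> fst (\<sigma> ?y) < fst (\<sigma> ?x)"
        using box_of_spec(1)[OF \<tau>'] kk' by (simp add: inversions_def)
      thus ?thesis by (simp add: f_def)
    qed simp
  qed
  have "image_mset f (mset_set {1..n}) = image_mset id (mset_set {1..n})"
    using bij by (simp add: image_mset_mset_set bij_betw_def)
  hence f_id: "f k = k" if "k \<in> {1..n}" for k
    using mono_on_eq_if_image_mset_eq[OF finite_atLeastAtMost mono_f _ _ that, of id]
    by (simp add: mono_onI)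
  show ?thesis
  proof
    fix x
    show "\<tau> x = \<sigma> x"
    proof (cases "x \<in> boxes la")
      case True
      have "fst (\<sigma> x) = fst (\<tau> x)"
        using f_id[OF PSYT_fst_in_range[OF \<tau>' True]] box_of_fst[OF \<tau>' True] by (simp add: f_def)
      moreover have "snd (\<sigma> x) = snd (\<tau> x)" using \<sigma> \<tau> True by (simp add: PSYT_T_def)
      ultimately show ?thesis by (simp add: prod_eq_iff)
    qed (simp add: PSYT_D(1)[OF \<sigma>'] PSYT_D(1)[OF \<tau>'])
  qed
qed

lemma exists_adjacent_inversion:
  assumes \<sigma>: "\<sigma> \<in> PSYT n la" and \<tau>: "\<tau> \<in> PSYT n la" and "inversions la \<sigma> \<tau> \<noteq> {}"
  obtains x y where "(x, y) \<in> inversions la \<sigma> \<tau>" "fst (\<tau> y) = fst (\<tau> x) + 1"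
proof -
  let ?gap = "\<lambda>p. fst (\<tau> (snd p)) - fst (\<tau> (fst p))"
  obtain p where p: "p \<in> inversions la \<sigma> \<tau>"
    and least: "\<And>q. q \<in> inversions la \<sigma> \<tau> \<Longrightarrow> ?gap p \<le> ?gap q"
    using ex_has_least_nat[of "\<lambda>q. q \<in> inversions la \<sigma> \<tau>" _ ?gap] assms(3) by blast
  obtain x y where p_xy: "p = (x, y)" by (cases p)
  have xy: "x \<in> boxes la" "y \<in> boxes la" "fst (\<tau> x) < fst (\<tau> y)" "fst (\<sigma> y) < fst (\<sigma> x)"
    using p by (auto simp: p_xy inversions_def)
  have "fst (\<tau> y) = fst (\<tau> x) + 1"
  proof (rule ccontr)
    assume "fst (\<tau> y) \<noteq> fst (\<tau> x) + 1"
    hence gap: "fst (\<tau> x) + 1 < fst (\<tau> y)" using xy(3) by simp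
    hence "fst (\<tau> x) + 1 \<in> {1..n}" using PSYT_fst_in_range[OF \<tau> xy(2)] by auto
    then obtain z where z: "z \<in> boxes la" "fst (\<tau> z) = fst (\<tau> x) + 1"
      using box_of_spec[OF \<tau>] by blast
    have "fst (\<sigma> z) \<noteq> fst (\<sigma> x)" using PSYT_fst_inj[OF \<sigma> z(1) xy(1)] z by auto
    hence "(x, z) \<in> inversions la \<sigma> \<tau> \<or> (z, y) \<in> inversions la \<sigma> \<tau>"
      using xy z gap by (auto simp: inversions_def)
    thus False using least[of "(x, z)"] least[of "(z, y)"] z gap by (auto simp: p_xy)
  qed
  thus thesis using that p by (simp add: p_xy)
qed

lemma lab_less_transpose_Suc:
  assumes "lab_less p p'" and "\<not> (fst p = i \<and> fst p' = i + 1 \<and> snd p = snd p')"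
  shows "lab_less (transpose i (i + 1) (fst p), snd p) (transpose i (i + 1) (fst p'), snd p')"
  using assms by (auto simp: lab_less_def transpose_def)

lemma s_tab_in_PSYT:
  assumes \<tau>: "\<tau> \<in> PSYT n la" and i: "i \<in> {1..<n}"
    and not_below: "\<And>x y. x \<in> boxes la \<Longrightarrow> y \<in> boxes la \<Longrightarrow> fst (\<tau> x) = i \<Longrightarrow> fst (\<tau> y) = i + 1
        \<Longrightarrow> snd (\<tau> x) = snd (\<tau> y) \<Longrightarrow> \<not> (fst x \<le> fst y \<and> snd x \<le> snd y)"
  shows "s_tab i \<tau> \<in> PSYT n la"
proof -
  have swap_less: "lab_less (s_tab i \<tau> x) (s_tab i \<tau> y)"
    if "x \<in> boxes la" "y \<in> boxes la" "lab_less (\<tau> x) (\<tau> y)" "fst x \<le> fst y" "snd x \<le> snd y" for x y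
    using lab_less_transpose_Suc[of "\<tau> x" "\<tau> y" i] not_below[of x y] that
    by (simp add: s_tab_apply) blast
  have "bij_betw (transpose i (i + 1) \<circ> (\<lambda>x. fst (\<tau> x))) (boxes la) {1..n}"
    by (rule bij_betw_trans[OF PSYT_D(2)[OF \<tau>] bij_betw_transpose_Suc[OF i]])
  moreover have "s_tab i \<tau> x = (0, 0)" if "x \<notin> boxes la" for x
    using PSYT_D(1)[OF \<tau> that] i by (simp add: s_tab_apply)
  ultimately show ?thesis
    using PSYT_D(3,4)[OF \<tau>] swap_less unfolding PSYT_def by (simp add: s_tab_apply o_def)
qed

lemma s_tab_in_PSYT_T:
  assumes part: "is_partition la n" and \<sigma>: "\<sigma> \<in> PSYT_T n la T" and \<tau>: "\<tau> \<in> PSYT_T n la T"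
    and inv: "(x, y) \<in> inversions la \<sigma> \<tau>" and adj: "fst (\<tau> y) = fst (\<tau> x) + 1"
  shows "fst (\<tau> x) \<in> {1..<n}" and "s_tab (fst (\<tau> x)) \<tau> \<in> PSYT_T n la T"
proof -
  have \<sigma>': "\<sigma> \<in> PSYT n la" and \<tau>': "\<tau> \<in> PSYT n la" using \<sigma> \<tau> by (simp_all add: PSYT_T_def)
  have xy: "x \<in> boxes la" "y \<in> boxes la" "fst (\<sigma> y) < fst (\<sigma> x)"
    using inv by (auto simp: inversions_def)
  show i: "fst (\<tau> x) \<in> {1..<n}"
    using PSYT_fst_in_range[OF \<tau>' xy(1)] PSYT_fst_in_range[OF \<tau>' xy(2)] adj by auto
  have "\<not> (fst x \<le> fst y \<and> snd x \<le> snd y)" if "snd (\<tau> x) = snd (\<tau> y)"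
  proof
    assume "fst x \<le> fst y \<and> snd x \<le> snd y"
    moreover have "x \<noteq> y" using adj by auto
    ultimately have "lab_less (\<sigma> x) (\<sigma> y)" using PSYT_lab_less_mono[OF part \<sigma>' xy(2)] by blast
    moreover have "snd (\<sigma> x) = snd (\<sigma> y)" using that \<sigma> \<tau> xy by (simp add: PSYT_T_def)
    ultimately show False using xy(3) by (simp add: lab_less_def)
  qed
  hence "s_tab (fst (\<tau> x)) \<tau> \<in> PSYT n la"
    using PSYT_fst_inj[OF \<tau>'] xy adj by (intro s_tab_in_PSYT[OF \<tau>' i]) metis
  thus "s_tab (fst (\<tau> x)) \<tau> \<in> PSYT_T n la T" using \<tau> by (simp add: PSYT_T_def s_tab_apply)
qed

lemma card_inversions_s_tab_less:
  assumes \<tau>: "\<tau> \<in> PSYT n la" and inv: "(x, y) \<in> inversions la \<sigma> \<tau>"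
    and adj: "fst (\<tau> y) = fst (\<tau> x) + 1"
  shows "card (inversions la \<sigma> (s_tab (fst (\<tau> x)) \<tau>)) < card (inversions la \<sigma> \<tau>)"
proof -
  let ?i = "fst (\<tau> x)"
  have "inversions la \<sigma> (s_tab ?i \<tau>) \<subseteq> inversions la \<sigma> \<tau> - {(x, y)}"
  proof
    fix p assume "p \<in> inversions la \<sigma> (s_tab ?i \<tau>)"
    then obtain u v where p: "p = (u, v)" and uv: "u \<in> boxes la" "v \<in> boxes la"
      "transpose ?i (?i + 1) (fst (\<tau> u)) < transpose ?i (?i + 1) (fst (\<tau> v))"
      "fst (\<sigma> v) < fst (\<sigma> u)"
      by (auto simp: inversions_def s_tab_apply)
    have "\<not> (fst (\<tau> u) = ?i + 1 \<and> fst (\<tau> v) = ?i)"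
    proof
      assume "fst (\<tau> u) = ?i + 1 \<and> fst (\<tau> v) = ?i"
      hence "u = y" "v = x" using PSYT_fst_inj[OF \<tau>] uv(1,2) inv adj by (auto simp: inversions_def)
      thus False using uv(4) inv by (simp add: inversions_def)
    qed
    hence "fst (\<tau> u) < fst (\<tau> v)" using uv(3) by (auto simp: transpose_def split: if_splits)
    moreover have "(u, v) \<noteq> (x, y)" using uv(3) adj by auto
    ultimately show "p \<in> inversions la \<sigma> \<tau> - {(x, y)}" using p uv by (simp add: inversions_def)
  qed
  hence "card (inversions la \<sigma> (s_tab ?i \<tau>)) \<le> card (inversions la \<sigma> \<tau> - {(x, y)})"
    by (intro card_mono) (simp_all add: finite_inversions)
  also have "\<dots> < card (inversions la \<sigma> \<tau>)" by (rule card_Diff1_less[OF finite_inversions inv])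
  finally show ?thesis .
qed

lemma PSYT_T_swap_induct:
  assumes part: "is_partition la n" and \<sigma>: "\<sigma> \<in> PSYT_T n la T" and base: "P \<sigma>"
    and step: "\<And>\<tau> i. \<tau> \<in> PSYT_T n la T \<Longrightarrow> i \<in> {1..<n} \<Longrightarrow> s_tab i \<tau> \<in> PSYT_T n la T
                 \<Longrightarrow> P (s_tab i \<tau>) \<Longrightarrow> P \<tau>"
    and \<tau>: "\<tau> \<in> PSYT_T n la T"
  shows "P \<tau>"
  using \<tau>
proof (induction "card (inversions la \<sigma> \<tau>)" arbitrary: \<tau> rule: less_induct)
  case less
  show ?case
  proof (cases "inversions la \<sigma> \<tau> = {}")
    case True
    thus ?thesis using PSYT_T_eq_if_no_inversions[OF \<sigma> less.prems] base by simp
  next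
    case False
    have \<sigma>': "\<sigma> \<in> PSYT n la" and \<tau>': "\<tau> \<in> PSYT n la"
      using \<sigma> less.prems by (simp_all add: PSYT_T_def)
    obtain x y where inv: "(x, y) \<in> inversions la \<sigma> \<tau>" and adj: "fst (\<tau> y) = fst (\<tau> x) + 1"
      using exists_adjacent_inversion[OF \<sigma>' \<tau>' False] by blast
    note swap = s_tab_in_PSYT_T[OF part \<sigma> less.prems inv adj]
    have "P (s_tab (fst (\<tau> x)) \<tau>)"
      using less.hyps[OF card_inversions_s_tab_less[OF \<tau>' inv adj] swap(2)] .
    thus ?thesis using step[OF less.prems swap] by blast
  qed
qed

lemma rank_less_rank:
  fixes key :: "'a \<Rightarrow> 'b::linorder"
  assumes "finite A" "x \<in> A" "key x < key y"
  shows "card {z \<in> A. key z < key x} < card {z \<in> A. key z < key y}"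
  by (rule psubset_card_mono) (use assms in auto)

lemma bij_betw_rank:
  fixes key :: "'a \<Rightarrow> 'b::linorder"
  assumes A: "finite A" and key: "inj_on key A"
  shows "bij_betw (\<lambda>x. card {y \<in> A. key y < key x} + 1) A {1..card A}"
proof -
  let ?rk = "\<lambda>x. card {y \<in> A. key y < key x} + 1"
  have inj: "inj_on ?rk A"
  proof (rule inj_onI)
    fix x y assume xy: "x \<in> A" "y \<in> A" "?rk x = ?rk y"
    show "x = y"
    proof (rule ccontr)
      assume "x \<noteq> y"
      hence "key x < key y \<or> key y < key x" using inj_onD[OF key _ xy(1,2)] neq_iff by blast
      thus False
        using rank_less_rank[OF A xy(1), where key = key and y = y]
          rank_less_rank[OF A xy(2), where key = key and y = x] xy(3)
        by auto
    qed
  qed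
  have "?rk ` A \<subseteq> {1..card A}"
  proof
    fix k assume "k \<in> ?rk ` A"
    then obtain x where x: "x \<in> A" "k = ?rk x" by blast
    have "card {y \<in> A. key y < key x} < card A"
      by (rule psubset_card_mono) (use A x in auto)
    thus "k \<in> {1..card A}" using x by simp
  qed
  moreover have "card (?rk ` A) = card {1..card A}" using card_image[OF inj] by simp
  ultimately have "?rk ` A = {1..card A}" by (intro card_subset_eq) simp_all
  thus ?thesis using inj by (simp add: bij_betw_def)
qed

lemma PSYT_T_nonempty:
  assumes part: "is_partition la n" and T: "T \<in> RYT la"
  obtains \<tau> where "\<tau> \<in> PSYT_T n la T"
proof -
  define key where "key x = (- int (T x), x)" for x :: "nat \<times> nat"
  define rk where "rk = (\<lambda>x. card {y \<in> boxes la. key y < key x} + 1)"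
  define \<tau> where "\<tau> x = (if x \<in> boxes la then (rk x, T x) else (0, 0))" for x
  have "inj_on key (boxes la)" by (simp add: inj_on_def key_def)
  hence "bij_betw rk (boxes la) {1..card (boxes la)}"
    unfolding rk_def by (rule bij_betw_rank[OF finite_boxes])
  hence "bij_betw rk (boxes la) {1..n}" by (simp add: card_boxes[OF part])
  hence bij: "bij_betw (\<lambda>x. fst (\<tau> x)) (boxes la) {1..n}"
    by (rule bij_betw_cong[THEN iffD1, rotated]) (simp add: \<tau>_def)
  have ordered: "lab_less (\<tau> x) (\<tau> y)" if "x \<in> boxes la" "y \<in> boxes la" "T y \<le> T x" "x < y" for x y
  proof -
    have "key x < key y" using that by (auto simp: key_def less_prod_def)
    hence "rk x < rk y" using rank_less_rank[OF finite_boxes that(1)] by (simp add: rk_def)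
    thus ?thesis using that by (auto simp: \<tau>_def lab_less_def)
  qed
  have "\<tau> \<in> PSYT n la"
    unfolding PSYT_def
  proof (intro CollectI conjI allI impI)
    fix a b assume "(a, b) \<in> boxes la \<and> (a, b + 1) \<in> boxes la"
    thus "lab_less (\<tau> (a, b)) (\<tau> (a, b + 1))" using T by (intro ordered) (auto simp: RYT_def)
  next
    fix a b assume "(a, b) \<in> boxes la \<and> (a + 1, b) \<in> boxes la"
    thus "lab_less (\<tau> (a, b)) (\<tau> (a + 1, b))" using T by (intro ordered) (auto simp: RYT_def)
  qed (use bij in \<open>simp_all add: \<tau>_def\<close>)
  hence "\<tau> \<in> PSYT_T n la T" by (simp add: PSYT_T_def \<tau>_def)
  thus thesis by (rule that)
qed

section \<open>Eigenvalues of the theta_i\<close>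

lemma tK_nonzero: "tK \<noteq> 0"
  by (simp add: tK_def Zero_fract_def eq_fract)

lemma qK_nonzero: "qK \<noteq> 0"
  by (simp add: qK_def Zero_fract_def eq_fract)

lemma qK_power_mult_tK_power: "qK ^ w * tK ^ m = Fract (monom (monom 1 m) w) 1"
proof -
  have Fract_power: "Fract (a :: rat poly poly) 1 ^ k = Fract (a ^ k) 1" for a k
    by (induct k) (simp_all add: One_fract_def)
  have "[:[:0, 1:]:] ^ m = [:monom (1 :: rat) m:]"
    by (induct m) (simp_all add: monom_altdef one_pCons)
  moreover have "[:0, 1:] ^ w = (monom 1 w :: rat poly poly)" by (simp add: monom_altdef)
  ultimately show ?thesis
    unfolding qK_def tK_def by (simp add: Fract_power smult_monom)
qed

lemma qK_power_mult_tK_power_inj: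
  assumes "qK ^ w * tK ^ m = qK ^ w' * tK ^ m'"
  shows "w = w' \<and> m = m'"
proof -
  have "monom (monom (1 :: rat) m) w = monom (monom 1 m') w'"
    using assms by (simp add: qK_power_mult_tK_power eq_fract)
  thus ?thesis by (simp add: monom_eq_iff')
qed

lemma qK_power_mult_tK_power_int_inj:
  assumes "qK ^ w * tK powi c = qK ^ w' * tK powi c'"
  shows "w = w' \<and> c = c'"
proof -
  define N where "N = nat \<bar>c\<bar> + nat \<bar>c'\<bar>"
  have shift: "tK powi d * tK ^ N = tK ^ nat (d + int N)" if "\<bar>d\<bar> \<le> int N" for d
  proof -
    have "tK powi d * tK ^ N = tK powi (d + int N)"
      using tK_nonzero by (simp add: power_int_add power_int_of_nat)
    also have "d + int N = int (nat (d + int N))" using that by simp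
    finally show ?thesis by (simp only: power_int_of_nat)
  qed
  have "tK powi c * tK ^ N = tK ^ nat (c + int N)" "tK powi c' * tK ^ N = tK ^ nat (c' + int N)"
    by (rule shift, simp add: N_def)+
  hence "qK ^ w * tK ^ nat (c + int N) = qK ^ w' * tK ^ nat (c' + int N)"
    using assms by (metis mult.assoc)
  from qK_power_mult_tK_power_inj[OF this] show ?thesis by (auto simp: N_def)
qed

definition eigval :: "nat list \<Rightarrow> (nat \<times> nat \<Rightarrow> nat \<times> nat) \<Rightarrow> nat \<Rightarrow> K" where
  "eigval la \<tau> k = qK ^ wtau la \<tau> k * tK powi ctau la \<tau> k"

lemma eigval_nonzero: "eigval la \<tau> k \<noteq> 0"
  using qK_nonzero tK_nonzero by (simp add: eigval_def)

lemma eigval_inj: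
  "eigval la \<sigma> k = eigval la \<tau> j \<Longrightarrow> wtau la \<sigma> k = wtau la \<tau> j \<and> ctau la \<sigma> k = ctau la \<tau> j"
  unfolding eigval_def by (rule qK_power_mult_tK_power_int_inj)

lemma s_up_eigval:
  assumes "s_up la \<tau> i"
  shows "eigval la \<tau> i \<noteq> eigval la \<tau> (i + 1)"
    and "eigval la \<tau> i \<noteq> tK * eigval la \<tau> (i + 1)"
    and "eigval la \<tau> (i + 1) \<noteq> tK * eigval la \<tau> i"
proof -
  have t_eigval: "tK * eigval la \<tau> k = qK ^ wtau la \<tau> k * tK powi (ctau la \<tau> k + 1)" for k
    using tK_nonzero by (simp add: eigval_def power_int_add_1')
  show "eigval la \<tau> i \<noteq> eigval la \<tau> (i + 1)"
    using assms eigval_inj[of la \<tau> i \<tau> "i + 1"] by (auto simp: s_up_def)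
  show "eigval la \<tau> i \<noteq> tK * eigval la \<tau> (i + 1)"
  proof
    assume "eigval la \<tau> i = tK * eigval la \<tau> (i + 1)"
    hence "qK ^ wtau la \<tau> i * tK powi ctau la \<tau> i
        = qK ^ wtau la \<tau> (i + 1) * tK powi (ctau la \<tau> (i + 1) + 1)"
      by (metis t_eigval eigval_def)
    from qK_power_mult_tK_power_int_inj[OF this] show False using assms by (auto simp: s_up_def)
  qed
  show "eigval la \<tau> (i + 1) \<noteq> tK * eigval la \<tau> i"
  proof
    assume "eigval la \<tau> (i + 1) = tK * eigval la \<tau> i"
    hence "qK ^ wtau la \<tau> (i + 1) * tK powi ctau la \<tau> (i + 1)
        = qK ^ wtau la \<tau> i * tK powi (ctau la \<tau> i + 1)"
      by (metis t_eigval eigval_def)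
    from qK_power_mult_tK_power_int_inj[OF this] show False using assms by (auto simp: s_up_def)
  qed
qed

lemma intertwiner_coeff_nonzero:
  fixes x y t :: "'a::field"
  assumes "x \<noteq> y" "x \<noteq> t * y" "y \<noteq> t * x"
  defines "c \<equiv> (t - 1) * y / (x - y)"
  shows "t - c * (t - 1 + c) \<noteq> 0"
proof -
  have cd: "c * (x - y) = (t - 1) * y" using assms(1) by (simp add: c_def)
  have "(t - c * (t - 1 + c)) * (x - y)\<^sup>2
      = t * (x - y)\<^sup>2 - (c * (x - y)) * ((t - 1) * (x - y) + c * (x - y))"
    by (simp add: power2_eq_square algebra_simps)
  also have "\<dots> = (x - t * y) * (t * x - y)"
    unfolding cd by (simp add: power2_eq_square algebra_simps)
  finally have "(t - c * (t - 1 + c)) * (x - y)\<^sup>2 = (x - t * y) * (t * x - y)" .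
  moreover have "(x - t * y) * (t * x - y) \<noteq> 0" using assms(2,3) by simp
  ultimately show ?thesis by auto
qed

section \<open>The module V_lambda in the basis F\<close>

locale V_lambda =
  fixes scale :: "K \<Rightarrow> 'v::ab_group_add \<Rightarrow> 'v" and n :: nat and la :: "nat list"
    and Top th X :: "nat \<Rightarrow> 'v \<Rightarrow> 'v" and F :: "(nat \<times> nat \<Rightarrow> nat \<times> nat) \<Rightarrow> 'v"
  assumes part: "is_partition la n" and data: "V_lambda_data scale n la Top th X F"
begin

abbreviation U :: "(nat \<times> nat \<Rightarrow> nat) \<Rightarrow> 'v set" where
  "U T \<equiv> U_T scale n la F T"

lemma D_module: "D_module scale n Top th X"
  using data by (simp add: V_lambda_data_def)

sublocale vs: vector_space scale
  using D_module by (simp add: D_module_def)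

sublocale vsp: vector_space_pair scale scale ..

lemma D_module_relations:
  shows "\<forall>i\<in>{1..<n}. Vector_Spaces.linear scale scale (Top i) \<and> bij (Top i)"
    and "\<forall>k\<in>{1..n}. Vector_Spaces.linear scale scale (th k) \<and> bij (th k)"
    and "\<forall>i\<in>{1..<n}. \<forall>v. Top i (Top i v) + scale (tK - 1) (Top i v) - scale tK v = 0"
    and "\<forall>i\<in>{1..<n}. \<forall>v. th (i + 1) v = scale tK (Tinv Top i (th i (Tinv Top i v)))"
    and "\<forall>i\<in>{1..<n}. \<forall>j\<in>{1..n}. j \<noteq> i \<and> j \<noteq> i + 1 \<longrightarrow> (\<forall>v. Top i (th j v) = th j (Top i v))"
proof -
  note D = D_module[unfolded D_module_def]
  from D show "\<forall>i\<in>{1..<n}. Vector_Spaces.linear scale scale (Top i) \<and> bij (Top i)"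
    by (elim conjE) assumption
  from D show "\<forall>k\<in>{1..n}. Vector_Spaces.linear scale scale (th k) \<and> bij (th k)"
    by (elim conjE) assumption
  from D show "\<forall>i\<in>{1..<n}. \<forall>v. Top i (Top i v) + scale (tK - 1) (Top i v) - scale tK v = 0"
    by (elim conjE) assumption
  from D show "\<forall>i\<in>{1..<n}. \<forall>v. th (i + 1) v = scale tK (Tinv Top i (th i (Tinv Top i v)))"
    by (elim conjE) assumption
  from D show "\<forall>i\<in>{1..<n}. \<forall>j\<in>{1..n}. j \<noteq> i \<and> j \<noteq> i + 1 \<longrightarrow> (\<forall>v. Top i (th j v) = th j (Top i v))"
    by (elim conjE) assumption
qed

lemma T_linear: "i \<in> {1..<n} \<Longrightarrow> Vector_Spaces.linear scale scale (Top i)"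
  and T_bij: "i \<in> {1..<n} \<Longrightarrow> bij (Top i)"
  and theta_linear: "k \<in> {1..n} \<Longrightarrow> Vector_Spaces.linear scale scale (th k)"
  and theta_bij: "k \<in> {1..n} \<Longrightarrow> bij (th k)"
  and hecke: "i \<in> {1..<n} \<Longrightarrow> Top i (Top i v) + scale (tK - 1) (Top i v) - scale tK v = 0"
  and theta_Suc: "i \<in> {1..<n} \<Longrightarrow> th (i + 1) v = scale tK (Tinv Top i (th i (Tinv Top i v)))"
  and T_theta_commute:
    "i \<in> {1..<n} \<Longrightarrow> j \<in> {1..n} \<Longrightarrow> j \<noteq> i \<Longrightarrow> j \<noteq> i + 1 \<Longrightarrow> Top i (th j v) = th j (Top i v)"
  using D_module_relations by blast+

lemma
  shows F_inj: "inj_on F (PSYT n la)"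
    and F_independent: "vs.independent (F ` PSYT n la)"
    and F_spans: "vs.span (F ` PSYT n la) = UNIV"
proof -
  note V = data[unfolded V_lambda_data_def]
  from V show "inj_on F (PSYT n la)" by (elim conjE) assumption
  from V show "vs.independent (F ` PSYT n la)" by (elim conjE) assumption
  from V show "vs.span (F ` PSYT n la) = UNIV" by (elim conjE) assumption
qed

lemma F_s_tab:
  assumes "\<tau> \<in> PSYT n la" "i \<in> {1..<n}" "s_tab i \<tau> \<in> PSYT n la" "s_up la \<tau> i"
  shows "F (s_tab i \<tau>) = scale tK (Tinv Top i (F \<tau>))
    + scale ((tK - 1) * eigval la \<tau> (i + 1) / (eigval la \<tau> i - eigval la \<tau> (i + 1))) (F \<tau>)"
proof -
  from data[unfolded V_lambda_data_def]
  have "\<forall>\<tau> i. \<tau> \<in> PSYT n la \<and> i \<in> {1..<n} \<and> s_tab i \<tau> \<in> PSYT n la \<and> s_up la \<tau> i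
        \<longrightarrow> F (s_tab i \<tau>) = scale tK (Tinv Top i (F \<tau>))
              + scale ((tK - 1) * qK ^ wtau la \<tau> (i + 1) * tK powi ctau la \<tau> (i + 1)
                  / (qK ^ wtau la \<tau> i * tK powi ctau la \<tau> i
                     - qK ^ wtau la \<tau> (i + 1) * tK powi ctau la \<tau> (i + 1))) (F \<tau>)"
    by (elim conjE) assumption
  with assms show ?thesis by (simp add: eigval_def mult.assoc)
qed

lemma theta_F:
  assumes "\<tau> \<in> PSYT n la" "k \<in> {1..n}"
  shows "th k (F \<tau>) = scale (eigval la \<tau> k) (F \<tau>)"
proof -
  from data[unfolded V_lambda_data_def]
  have "\<forall>\<tau> i. \<tau> \<in> PSYT n la \<and> i \<in> {1..n} \<longrightarrow>
        th i (F \<tau>) = scale (qK ^ wtau la \<tau> i * tK powi ctau la \<tau> i) (F \<tau>)"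
    by (elim conjE) assumption
  with assms show ?thesis by (simp add: eigval_def)
qed

lemmas T_add = vsp.linear_add[OF T_linear]
  and T_scale = vsp.linear_scale[OF T_linear]
  and theta_add = vsp.linear_add[OF theta_linear]
  and theta_scale = vsp.linear_scale[OF theta_linear]
  and theta_sum = vsp.linear_sum[OF theta_linear]

lemma T_Tinv: "i \<in> {1..<n} \<Longrightarrow> Top i (Tinv Top i v) = v"
  unfolding Tinv_def using T_bij by (simp add: bij_is_surj surj_f_inv_f)

lemma Tinv_T: "i \<in> {1..<n} \<Longrightarrow> Tinv Top i (Top i v) = v"
  unfolding Tinv_def using T_bij by (simp add: bij_is_inj inv_f_f)

lemma scale_tK_Tinv: "i \<in> {1..<n} \<Longrightarrow> scale tK (Tinv Top i v) = Top i v + scale (tK - 1) v"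
  using hecke[of i "Tinv Top i v"] by (simp add: T_Tinv algebra_simps)

lemma T_T: "i \<in> {1..<n} \<Longrightarrow> Top i (Top i v) = scale tK v - scale (tK - 1) (Top i v)"
  using hecke[of i v] by (simp add: algebra_simps)

definition coord :: "'v \<Rightarrow> (nat \<times> nat \<Rightarrow> nat \<times> nat) \<Rightarrow> K" where
  "coord v \<sigma> = vs.representation (F ` PSYT n la) v (F \<sigma>)"

definition coord_supp :: "'v \<Rightarrow> (nat \<times> nat \<Rightarrow> nat \<times> nat) set" where
  "coord_supp v = {\<sigma> \<in> PSYT n la. coord v \<sigma> \<noteq> 0}"

lemma coord_add: "coord (u + v) \<sigma> = coord u \<sigma> + coord v \<sigma>"
  and coord_diff: "coord (u - v) \<sigma> = coord u \<sigma> - coord v \<sigma>"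
  and coord_scale: "coord (scale a v) \<sigma> = a * coord v \<sigma>"
  and coord_zero: "coord 0 \<sigma> = 0"
  unfolding coord_def using F_independent F_spans
  by (simp_all add: vs.representation_add vs.representation_diff vs.representation_scale
      vs.representation_zero)

lemma coord_sum: "coord (sum u J) \<sigma> = (\<Sum>j\<in>J. coord (u j) \<sigma>)"
  by (induction J rule: infinite_finite_induct) (simp_all add: coord_zero coord_add)

lemma coord_F: "\<tau> \<in> PSYT n la \<Longrightarrow> \<sigma> \<in> PSYT n la \<Longrightarrow> coord (F \<tau>) \<sigma> = (if \<sigma> = \<tau> then 1 else 0)"
  unfolding coord_def using vs.representation_basis[OF F_independent, of "F \<tau>"] F_inj
  by (auto simp: inj_on_def)

lemma F_nonzero: "\<tau> \<in> PSYT n la \<Longrightarrow> F \<tau> \<noteq> 0"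
  using coord_F[of \<tau> \<tau>] coord_zero[of \<tau>] by auto

lemma finite_coord_supp: "finite (coord_supp v)"
proof -
  have "F ` coord_supp v \<subseteq> {b. vs.representation (F ` PSYT n la) v b \<noteq> 0}"
    unfolding coord_supp_def coord_def by auto
  hence "finite (F ` coord_supp v)" using vs.finite_representation finite_subset by blast
  moreover have "inj_on F (coord_supp v)"
    using F_inj by (rule inj_on_subset) (auto simp: coord_supp_def)
  ultimately show ?thesis using finite_image_iff by blast
qed

lemma coord_expansion: "v = (\<Sum>\<sigma>\<in>coord_supp v. scale (coord v \<sigma>) (F \<sigma>))"
proof -
  let ?B = "F ` PSYT n la"
  have supp: "{b. vs.representation ?B v b \<noteq> 0} = F ` coord_supp v"
  proof (intro equalityI subsetI)
    fix b assume b: "b \<in> {b. vs.representation ?B v b \<noteq> 0}"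
    then obtain \<sigma> where "\<sigma> \<in> PSYT n la" "b = F \<sigma>" using vs.representation_ne_zero by blast
    thus "b \<in> F ` coord_supp v" using b by (auto simp: coord_supp_def coord_def)
  qed (auto simp: coord_supp_def coord_def)
  have "v = (\<Sum>b | vs.representation ?B v b \<noteq> 0. scale (vs.representation ?B v b) b)"
    using vs.sum_nonzero_representation_eq[OF F_independent, of v] F_spans by simp
  also have "\<dots> = (\<Sum>\<sigma>\<in>coord_supp v. scale (coord v \<sigma>) (F \<sigma>))"
    unfolding supp using F_inj
    by (subst sum.reindex) (auto simp: coord_supp_def coord_def inj_on_def)
  finally show ?thesis .
qed

lemma coord_supp_empty_iff: "coord_supp v = {} \<longleftrightarrow> v = 0"
  using coord_expansion[of v] by (auto simp: coord_supp_def coord_zero)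

lemma coord_lincomb:
  assumes "finite S" "S \<subseteq> PSYT n la" "\<sigma> \<in> PSYT n la"
  shows "coord (\<Sum>\<rho>\<in>S. scale (c \<rho>) (F \<rho>)) \<sigma> = (if \<sigma> \<in> S then c \<sigma> else 0)"
  using assms
proof (induction S rule: finite_induct)
  case (insert \<rho> S)
  thus ?case by (auto simp: coord_add coord_scale coord_F)
qed (simp add: coord_zero)

lemma eq_iff_coord_eq: "u = v \<longleftrightarrow> (\<forall>\<sigma>\<in>PSYT n la. coord u \<sigma> = coord v \<sigma>)"
proof
  assume "\<forall>\<sigma>\<in>PSYT n la. coord u \<sigma> = coord v \<sigma>"
  hence "coord_supp u = coord_supp v" "\<And>\<sigma>. \<sigma> \<in> coord_supp u \<Longrightarrow> coord u \<sigma> = coord v \<sigma>"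
    by (auto simp: coord_supp_def)
  thus "u = v" using coord_expansion[of u] coord_expansion[of v] by simp
qed simp

lemma coord_theta: "k \<in> {1..n} \<Longrightarrow> \<sigma> \<in> PSYT n la \<Longrightarrow> coord (th k v) \<sigma> = eigval la \<sigma> k * coord v \<sigma>"
proof -
  assume k: "k \<in> {1..n}" and \<sigma>: "\<sigma> \<in> PSYT n la"
  have supp: "coord_supp v \<subseteq> PSYT n la" by (auto simp: coord_supp_def)
  have "th k v = (\<Sum>\<rho>\<in>coord_supp v. scale (coord v \<rho>) (th k (F \<rho>)))"
    by (subst coord_expansion) (simp add: theta_sum[OF k] theta_scale[OF k])
  also have "\<dots> = (\<Sum>\<rho>\<in>coord_supp v. scale (coord v \<rho> * eigval la \<rho> k) (F \<rho>))"
    using supp by (intro sum.cong) (auto simp: theta_F[OF _ k])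
  finally show ?thesis
    using coord_lincomb[OF finite_coord_supp supp \<sigma>] by (auto simp: coord_supp_def \<sigma>)
qed

lemma in_span_F_iff:
  assumes "A \<subseteq> PSYT n la"
  shows "v \<in> vs.span (F ` A) \<longleftrightarrow> coord_supp v \<subseteq> A"
proof
  assume v: "v \<in> vs.span (F ` A)"
  show "coord_supp v \<subseteq> A"
  proof
    fix \<sigma> assume "\<sigma> \<in> coord_supp v"
    hence \<sigma>: "\<sigma> \<in> PSYT n la" "coord v \<sigma> \<noteq> 0" by (auto simp: coord_supp_def)
    have "F ` A \<subseteq> F ` PSYT n la" using assms by blast
    hence "coord v \<sigma> = vs.representation (F ` A) v (F \<sigma>)"
      unfolding coord_def using vs.representation_extend[OF F_independent v] by simp
    hence "F \<sigma> \<in> F ` A" using \<sigma>(2) vs.representation_ne_zero by metis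
    thus "\<sigma> \<in> A" using F_inj \<sigma>(1) assms by (auto simp: inj_on_def)
  qed
next
  assume "coord_supp v \<subseteq> A"
  hence "(\<Sum>\<sigma>\<in>coord_supp v. scale (coord v \<sigma>) (F \<sigma>)) \<in> vs.span (F ` A)"
    by (intro vs.span_sum vs.span_scale vs.span_base) auto
  thus "v \<in> vs.span (F ` A)" using coord_expansion[of v] by simp
qed

lemma theta_Suc_T_F:
  assumes \<tau>: "\<tau> \<in> PSYT n la" and i: "i \<in> {1..<n}"
  shows "th (i + 1) (Top i (F \<tau>))
    = scale (eigval la \<tau> i) (Top i (F \<tau>)) + scale ((tK - 1) * eigval la \<tau> i) (F \<tau>)"
proof -
  have "th (i + 1) (Top i (F \<tau>)) = scale tK (Tinv Top i (th i (Tinv Top i (Top i (F \<tau>)))))"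
    by (rule theta_Suc[OF i])
  also have "\<dots> = scale tK (Tinv Top i (scale (eigval la \<tau> i) (F \<tau>)))"
    using i by (simp add: Tinv_T theta_F[OF \<tau>])
  also have "\<dots> = Top i (scale (eigval la \<tau> i) (F \<tau>)) + scale (tK - 1) (scale (eigval la \<tau> i) (F \<tau>))"
    by (rule scale_tK_Tinv[OF i])
  finally show ?thesis by (simp add: T_scale[OF i])
qed

lemma theta_T_F:
  assumes \<tau>: "\<tau> \<in> PSYT n la" and i: "i \<in> {1..<n}"
  shows "th i (Top i (F \<tau>)) + scale ((tK - 1) * eigval la \<tau> i) (F \<tau>)
    = scale (eigval la \<tau> (i + 1)) (Top i (F \<tau>))"
proof -
  have i1: "i \<in> {1..n}" "i + 1 \<in> {1..n}" using i by auto
  have "scale (eigval la \<tau> (i + 1)) (Top i (F \<tau>)) = Top i (th (i + 1) (F \<tau>))"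
    by (simp only: theta_F[OF \<tau> i1(2)] T_scale[OF i])
  also have "\<dots> = scale tK (th i (Tinv Top i (F \<tau>)))"
    by (simp only: theta_Suc[OF i] T_scale[OF i] T_Tinv[OF i])
  also have "\<dots> = th i (Top i (F \<tau>) + scale (tK - 1) (F \<tau>))"
    by (simp only: theta_scale[OF i1(1), symmetric] scale_tK_Tinv[OF i])
  also have "\<dots> = th i (Top i (F \<tau>)) + scale ((tK - 1) * eigval la \<tau> i) (F \<tau>)"
    by (simp add: theta_add[OF i1(1)] theta_scale[OF i1(1)]
        theta_F[OF \<tau> i1(1)])
  finally show ?thesis by simp
qed

lemma theta_other_T_F:
  assumes \<tau>: "\<tau> \<in> PSYT n la" and i: "i \<in> {1..<n}" and j: "j \<in> {1..n}" "j \<noteq> i" "j \<noteq> i + 1"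
  shows "th j (Top i (F \<tau>)) = scale (eigval la \<tau> j) (Top i (F \<tau>))"
  using T_theta_commute[OF i j, of "F \<tau>"] by (simp add: theta_F[OF \<tau> j(1)] T_scale[OF i])

text \<open>Reading the three relations above in coordinates: a tableau \<sigma> \<noteq> \<tau> in the support of
  T_i F_\<tau> has the theta-eigenvalues of \<tau> permuted by the transposition of i and i+1.\<close>

lemma coord_T_F_nonzero_imp_same_snd:
  assumes \<tau>: "\<tau> \<in> PSYT n la" and \<sigma>: "\<sigma> \<in> PSYT n la" and i: "i \<in> {1..<n}"
    and nonzero: "coord (Top i (F \<tau>)) \<sigma> \<noteq> 0" and x: "x \<in> boxes la"
  shows "snd (\<sigma> x) = snd (\<tau> x)"
proof (cases "\<sigma> = \<tau>")
  case False
  let ?w = "Top i (F \<tau>)"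
  have F\<tau>: "coord (F \<tau>) \<sigma> = 0" using coord_F[OF \<tau> \<sigma>] False by simp
  have i1: "i \<in> {1..n}" "i + 1 \<in> {1..n}" using i by auto
  have "eigval la \<sigma> (i + 1) * coord ?w \<sigma> = eigval la \<tau> i * coord ?w \<sigma>"
    using arg_cong[OF theta_Suc_T_F[OF \<tau> i], of "\<lambda>v. coord v \<sigma>"]
    by (simp only: coord_theta[OF i1(2) \<sigma>] coord_add coord_scale F\<tau> mult_zero_right add_0_right)
  moreover have "eigval la \<sigma> i * coord ?w \<sigma> = eigval la \<tau> (i + 1) * coord ?w \<sigma>"
    using arg_cong[OF theta_T_F[OF \<tau> i], of "\<lambda>v. coord v \<sigma>"]
    by (simp add: coord_theta[OF i1(1) \<sigma>] coord_add coord_scale F\<tau>)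
  moreover have "eigval la \<sigma> j * coord ?w \<sigma> = eigval la \<tau> j * coord ?w \<sigma>"
    if "j \<in> {1..n}" "j \<noteq> i" "j \<noteq> i + 1" for j
    using arg_cong[OF theta_other_T_F[OF \<tau> i that], of "\<lambda>v. coord v \<sigma>"]
    by (simp add: coord_theta[OF that(1) \<sigma>] coord_scale)
  ultimately have "eigval la \<sigma> k = eigval la \<tau> (transpose i (i + 1) k)" if "k \<in> {1..n}" for k
    using nonzero that by (cases "k = i \<or> k = i + 1") auto
  hence "\<forall>k\<in>{1..n}. ctau la \<sigma> k = ctau la \<tau> (transpose i (i + 1) k)
      \<and> wtau la \<sigma> k = wtau la \<tau> (transpose i (i + 1) k)"
    using eigval_inj by blast
  thus ?thesis
    using PSYT_snd_eq_if_permuted_weights[OF part \<sigma> \<tau> bij_betw_transpose_Suc[OF i] _ x] by blast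
qed simp

section \<open>The submodules U_T\<close>

lemma in_U_T_iff: "v \<in> U T \<longleftrightarrow> coord_supp v \<subseteq> PSYT_T n la T"
  unfolding U_T_def by (rule in_span_F_iff[OF PSYT_T_subset])

lemma F_in_U_T: "\<tau> \<in> PSYT_T n la T \<Longrightarrow> F \<tau> \<in> U T"
  unfolding U_T_def by (rule vs.span_base) blast

lemma subspace_U_T: "vs.subspace (U T)"
  unfolding U_T_def by (rule vs.subspace_span)

lemma T_F_in_U_T:
  assumes \<tau>: "\<tau> \<in> PSYT_T n la T" and i: "i \<in> {1..<n}"
  shows "Top i (F \<tau>) \<in> U T"
  unfolding in_U_T_iff
proof
  fix \<sigma> assume "\<sigma> \<in> coord_supp (Top i (F \<tau>))"
  hence \<sigma>: "\<sigma> \<in> PSYT n la" "coord (Top i (F \<tau>)) \<sigma> \<noteq> 0" by (auto simp: coord_supp_def)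
  have "snd (\<sigma> x) = snd (\<tau> x)" if "x \<in> boxes la" for x
    using coord_T_F_nonzero_imp_same_snd[OF _ \<sigma>(1) i \<sigma>(2) that] \<tau> PSYT_T_subset by blast
  thus "\<sigma> \<in> PSYT_T n la T" using \<tau> \<sigma>(1) by (auto simp: PSYT_T_def)
qed

lemma linear_image_U_T_subset:
  assumes f: "Vector_Spaces.linear scale scale f" and F: "\<And>\<tau>. \<tau> \<in> PSYT_T n la T \<Longrightarrow> f (F \<tau>) \<in> U T"
  shows "f ` U T \<subseteq> U T"
proof -
  have "f ` U T = vs.span (f ` F ` PSYT_T n la T)" unfolding U_T_def vsp.linear_span_image[OF f] ..
  also have "\<dots> \<subseteq> U T" using F subspace_U_T by (intro vs.span_minimal) auto
  finally show ?thesis .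
qed

lemma inv_theta_image_U_T_subset:
  assumes k: "k \<in> {1..n}"
  shows "inv (th k) ` U T \<subseteq> U T"
proof
  fix u assume "u \<in> inv (th k) ` U T"
  then obtain v where v: "v \<in> U T" "u = inv (th k) v" by blast
  have supp: "coord_supp v \<subseteq> PSYT_T n la T" using v in_U_T_iff by blast
  define u' where "u' = (\<Sum>\<sigma>\<in>coord_supp v. scale (coord v \<sigma> / eigval la \<sigma> k) (F \<sigma>))"
  have "th k u' = (\<Sum>\<sigma>\<in>coord_supp v. scale (coord v \<sigma> / eigval la \<sigma> k) (th k (F \<sigma>)))"
    unfolding u'_def by (simp add: theta_sum[OF k] theta_scale[OF k])
  also have "\<dots> = (\<Sum>\<sigma>\<in>coord_supp v. scale (coord v \<sigma>) (F \<sigma>))"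
  proof (rule sum.cong)
    fix \<sigma> assume "\<sigma> \<in> coord_supp v"
    hence "\<sigma> \<in> PSYT n la" using supp PSYT_T_subset by blast
    thus "scale (coord v \<sigma> / eigval la \<sigma> k) (th k (F \<sigma>)) = scale (coord v \<sigma>) (F \<sigma>)"
      using eigval_nonzero[of la \<sigma> k] by (simp add: theta_F[OF _ k])
  qed simp
  also have "\<dots> = v" using coord_expansion[of v] by simp
  finally have "u = u'" using v theta_bij[OF k] by (metis bij_is_inj inv_f_f)
  moreover have "u' \<in> U T"
    unfolding u'_def using supp F_in_U_T subspace_U_T
    by (intro vs.subspace_sum vs.subspace_scale) auto
  ultimately show "u \<in> U T" by simp
qed

lemma An_submodule_U_T: "An_submodule scale n Top th (U T)"
  unfolding An_submodule_def An_stable_def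
proof (intro conjI ballI subspace_U_T)
  fix i assume i: "i \<in> {1..<n}"
  show T: "Top i ` U T \<subseteq> U T"
    by (rule linear_image_U_T_subset[OF T_linear[OF i] T_F_in_U_T[OF _ i]])
  show "Tinv Top i ` U T \<subseteq> U T"
  proof
    fix u assume "u \<in> Tinv Top i ` U T"
    then obtain v where v: "v \<in> U T" "u = Tinv Top i v" by blast
    have "scale (inverse tK) (Top i v + scale (tK - 1) v) \<in> U T"
      using T v subspace_U_T by (intro vs.subspace_scale vs.subspace_add) auto
    moreover have "u = scale (inverse tK) (Top i v + scale (tK - 1) v)"
      using v scale_tK_Tinv[OF i, of v, symmetric] tK_nonzero by simp
    ultimately show "u \<in> U T" by simp
  qed
next
  fix k assume k: "k \<in> {1..n}"
  show "th k ` U T \<subseteq> U T"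
  proof (rule linear_image_U_T_subset[OF theta_linear[OF k]])
    fix \<tau> assume \<tau>: "\<tau> \<in> PSYT_T n la T"
    have "th k (F \<tau>) = scale (eigval la \<tau> k) (F \<tau>)" using \<tau> PSYT_T_subset theta_F[OF _ k] by blast
    thus "th k (F \<tau>) \<in> U T" using vs.subspace_scale[OF subspace_U_T F_in_U_T[OF \<tau>]] by simp
  qed
  show "inv (th k) ` U T \<subseteq> U T" by (rule inv_theta_image_U_T_subset[OF k])
qed

lemma exists_eigval_ne:
  assumes "\<sigma> \<in> PSYT n la" "\<rho> \<in> PSYT n la" "\<sigma> \<noteq> \<rho>"
  obtains k where "k \<in> {1..n}" "eigval la \<sigma> k \<noteq> eigval la \<rho> k"
proof -
  obtain k where "k \<in> {1..n}" "\<not> (ctau la \<sigma> k = ctau la \<rho> k \<and> wtau la \<sigma> k = wtau la \<rho> k)"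
    using PSYT_eq_if_same_weights[OF part assms(1,2)] assms(3) by blast
  thus thesis using that eigval_inj by blast
qed

lemma An_submodule_contains_F:
  assumes W: "An_submodule scale n Top th W" and sub: "W \<subseteq> U T"
  shows "v \<in> W \<Longrightarrow> v \<noteq> 0 \<Longrightarrow> \<exists>\<sigma>\<in>PSYT_T n la T. F \<sigma> \<in> W"
proof (induction "card (coord_supp v)" arbitrary: v rule: less_induct)
  case (less v)
  have subspace: "vs.subspace W" and stable: "An_stable n Top th W"
    using W by (simp_all add: An_submodule_def)
  have supp: "coord_supp v \<subseteq> PSYT_T n la T" using less.prems sub in_U_T_iff by blast
  obtain \<sigma> where \<sigma>: "\<sigma> \<in> coord_supp v" using less.prems(2) coord_supp_empty_iff by blast
  show ?case
  proof (cases "coord_supp v = {\<sigma>}")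
    case True
    hence v: "v = scale (coord v \<sigma>) (F \<sigma>)" using coord_expansion[of v] by simp
    have "coord v \<sigma> \<noteq> 0" using \<sigma> by (simp add: coord_supp_def)
    hence "F \<sigma> = scale (inverse (coord v \<sigma>)) v" by (subst v) simp
    hence "F \<sigma> \<in> W" using vs.subspace_scale[OF subspace less.prems(1)] by simp
    thus ?thesis using \<sigma> supp by blast
  next
    case False
    then obtain \<rho> where \<rho>: "\<rho> \<in> coord_supp v" "\<rho> \<noteq> \<sigma>" using \<sigma> by blast
    obtain k where k: "k \<in> {1..n}" "eigval la \<sigma> k \<noteq> eigval la \<rho> k"
      using exists_eigval_ne[of \<sigma> \<rho>] \<sigma> \<rho> by (auto simp: coord_supp_def)
    define v' where "v' = th k v - scale (eigval la \<rho> k) v"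
    have "th k v \<in> W" using stable k(1) less.prems(1) unfolding An_stable_def by blast
    hence v'W: "v' \<in> W"
      unfolding v'_def using subspace less.prems(1) by (intro vs.subspace_diff vs.subspace_scale)
    have coord_v': "coord v' \<pi> = (eigval la \<pi> k - eigval la \<rho> k) * coord v \<pi>"
      if "\<pi> \<in> PSYT n la" for \<pi>
      unfolding v'_def using that
      by (simp add: coord_diff coord_scale coord_theta[OF k(1)] algebra_simps)
    have "coord_supp v' \<subseteq> coord_supp v - {\<rho>}" using coord_v' by (auto simp: coord_supp_def)
    hence "card (coord_supp v') < card (coord_supp v)"
      using \<rho>(1) finite_coord_supp by (meson card_Diff1_less card_mono finite_Diff le_less_trans)
    moreover have "v' \<noteq> 0"
      using coord_v'[of \<sigma>] \<sigma> k(2) by (auto simp: coord_supp_def coord_zero)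
    ultimately show ?thesis using less.hyps v'W by blast
  qed
qed

lemma T_F_s_tab:
  assumes \<tau>: "\<tau> \<in> PSYT n la" and i: "i \<in> {1..<n}" and \<tau>': "s_tab i \<tau> \<in> PSYT n la"
    and up: "s_up la \<tau> i"
  defines "c \<equiv> (tK - 1) * eigval la \<tau> (i + 1) / (eigval la \<tau> i - eigval la \<tau> (i + 1))"
  shows "Top i (F (s_tab i \<tau>)) - scale c (F (s_tab i \<tau>)) = scale (tK - c * (tK - 1 + c)) (F \<tau>)"
proof -
  let ?a = "F \<tau>" and ?d = "tK - 1 + c"
  have F': "F (s_tab i \<tau>) = Top i ?a + scale ?d ?a"
    using F_s_tab[OF \<tau> i \<tau>' up] by (simp add: c_def scale_tK_Tinv[OF i] vs.scale_left_distrib)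
  have "Top i (F (s_tab i \<tau>)) = scale tK ?a - scale (tK - 1) (Top i ?a) + scale ?d (Top i ?a)"
    by (simp add: F' T_add[OF i] T_scale[OF i] T_T[OF i])
  thus ?thesis
    by (simp add: F' vs.scale_left_distrib vs.scale_left_diff_distrib vs.scale_right_distrib
        algebra_simps)
qed

lemma F_in_submodule_if_F_s_tab:
  assumes W: "An_submodule scale n Top th W" and \<tau>: "\<tau> \<in> PSYT n la" and i: "i \<in> {1..<n}"
    and \<tau>': "s_tab i \<tau> \<in> PSYT n la" and FW: "F (s_tab i \<tau>) \<in> W"
  shows "F \<tau> \<in> W"
proof -
  have subspace: "vs.subspace W" and stable: "An_stable n Top th W"
    using W by (simp_all add: An_submodule_def)
  have TW: "Top i (F (s_tab i \<tau>)) \<in> W" and TinvW: "Tinv Top i (F (s_tab i \<tau>)) \<in> W"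
    using stable i FW unfolding An_stable_def by blast+
  from s_up_or_s_up_s_tab[OF part \<tau> \<tau>' i] show ?thesis
  proof
    assume up: "s_up la \<tau> i"
    define c where "c = (tK - 1) * eigval la \<tau> (i + 1) / (eigval la \<tau> i - eigval la \<tau> (i + 1))"
    define \<beta> where "\<beta> = tK - c * (tK - 1 + c)"
    have "\<beta> \<noteq> 0"
      unfolding \<beta>_def c_def using intertwiner_coeff_nonzero[OF s_up_eigval[OF up]] .
    have "Top i (F (s_tab i \<tau>)) - scale c (F (s_tab i \<tau>)) \<in> W"
      using subspace TW FW by (intro vs.subspace_diff vs.subspace_scale)
    hence "scale \<beta> (F \<tau>) \<in> W"
      using T_F_s_tab[OF \<tau> i \<tau>' up] unfolding \<beta>_def c_def by simp
    hence "scale (inverse \<beta>) (scale \<beta> (F \<tau>)) \<in> W" by (rule vs.subspace_scale[OF subspace])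
    thus ?thesis using \<open>\<beta> \<noteq> 0\<close> by simp
  next
    assume up: "s_up la (s_tab i \<tau>) i"
    have "F \<tau> = scale tK (Tinv Top i (F (s_tab i \<tau>)))
      + scale ((tK - 1) * eigval la (s_tab i \<tau>) (i + 1)
          / (eigval la (s_tab i \<tau>) i - eigval la (s_tab i \<tau>) (i + 1))) (F (s_tab i \<tau>))"
      using F_s_tab[OF \<tau>' i _ up] \<tau> by (simp add: s_tab_s_tab)
    thus ?thesis using subspace TinvW FW by (simp add: vs.subspace_add vs.subspace_scale)
  qed
qed

lemma An_irreducible_U_T:
  assumes T: "T \<in> RYT la"
  shows "An_irreducible scale n Top th (U T)"
  unfolding An_irreducible_def
proof (intro conjI allI impI An_submodule_U_T)
  obtain \<tau> where \<tau>: "\<tau> \<in> PSYT_T n la T" using PSYT_T_nonempty[OF part T] .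
  show "U T \<noteq> {0}" using F_in_U_T[OF \<tau>] F_nonzero \<tau> PSYT_T_subset by blast
  fix W assume "An_submodule scale n Top th W \<and> W \<subseteq> U T"
  hence W: "An_submodule scale n Top th W" and sub: "W \<subseteq> U T" by blast+
  show "W = {0} \<or> W = U T"
  proof (cases "W = {0}")
    case False
    moreover have "0 \<in> W" using W by (simp add: An_submodule_def vs.subspace_0)
    ultimately obtain v where "v \<in> W" "v \<noteq> 0" by blast
    then obtain \<sigma> where \<sigma>: "\<sigma> \<in> PSYT_T n la T" "F \<sigma> \<in> W"
      using An_submodule_contains_F[OF W sub] by blast
    have "F \<rho> \<in> W" if "\<rho> \<in> PSYT_T n la T" for \<rho>
      using PSYT_T_swap_induct[OF part \<sigma>(1), where P = "\<lambda>\<rho>. F \<rho> \<in> W", OF \<sigma>(2) _ that]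
        F_in_submodule_if_F_s_tab[OF W] PSYT_T_subset by blast
    hence "U T \<subseteq> W"
      unfolding U_T_def using W by (intro vs.span_minimal) (auto simp: An_submodule_def)
    thus ?thesis using sub by blast
  qed simp
qed

lemma snd_PSYT_in_RYT:
  assumes \<tau>: "\<tau> \<in> PSYT n la"
  shows "(\<lambda>x. snd (\<tau> x)) \<in> RYT la"
  unfolding RYT_def
proof (intro CollectI conjI allI impI)
  fix x :: "nat \<times> nat" assume "x \<notin> boxes la"
  thus "snd (\<tau> x) = 0" using PSYT_D(1)[OF \<tau>] by simp
next
  fix a b assume "(a, b) \<in> boxes la \<and> (a, b + 1) \<in> boxes la"
  thus "snd (\<tau> (a, b + 1)) \<le> snd (\<tau> (a, b))"
    using PSYT_D(3)[OF \<tau>, of a b] by (auto simp: lab_less_def)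
next
  fix a b assume "(a, b) \<in> boxes la \<and> (a + 1, b) \<in> boxes la"
  thus "snd (\<tau> (a + 1, b)) \<le> snd (\<tau> (a, b))"
    using PSYT_D(4)[OF \<tau>, of a b] by (auto simp: lab_less_def)
qed

lemma PSYT_T_disjoint:
  assumes "T \<in> RYT la" "T' \<in> RYT la" "\<sigma> \<in> PSYT_T n la T" "\<sigma> \<in> PSYT_T n la T'"
  shows "T = T'"
proof
  fix x
  show "T x = T' x"
  proof (cases "x \<in> boxes la")
    case False
    thus ?thesis using assms(1,2) unfolding RYT_def mem_Collect_eq by metis
  qed (use assms(3,4) in \<open>simp add: PSYT_T_def\<close>)
qed

lemma span_U_T: "vs.span (\<Union>T\<in>RYT la. U T) = UNIV"
proof -
  have "F ` PSYT n la \<subseteq> (\<Union>T\<in>RYT la. U T)"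
    using snd_PSYT_in_RYT F_in_U_T by (fastforce simp: PSYT_T_def)
  hence "vs.span (F ` PSYT n la) \<subseteq> vs.span (\<Union>T\<in>RYT la. U T)" by (rule vs.span_mono)
  thus ?thesis using F_spans by auto
qed

lemma U_T_independent:
  assumes J: "finite J" "J \<subseteq> RYT la" and u: "\<forall>T\<in>J. u T \<in> U T" and sum: "(\<Sum>T\<in>J. u T) = 0"
    and T0: "T0 \<in> J"
  shows "u T0 = 0"
proof -
  have "coord (u T0) \<sigma> = 0" if \<sigma>: "\<sigma> \<in> PSYT n la" for \<sigma>
  proof (rule ccontr)
    assume nonzero: "coord (u T0) \<sigma> \<noteq> 0"
    hence "\<sigma> \<in> PSYT_T n la T0" using u T0 \<sigma> in_U_T_iff by (auto simp: coord_supp_def)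
    hence other: "coord (u T) \<sigma> = 0" if "T \<in> J - {T0}" for T
      using that u J(2) T0 \<sigma> in_U_T_iff PSYT_T_disjoint[of T T0 \<sigma>] by (auto simp: coord_supp_def)
    have "coord (\<Sum>T\<in>J. u T) \<sigma> = coord (u T0) \<sigma> + (\<Sum>T\<in>J - {T0}. coord (u T) \<sigma>)"
      unfolding coord_sum using J(1) T0 by (simp add: sum.remove)
    also have "\<dots> = coord (u T0) \<sigma>" using other by simp
    finally show False using sum nonzero by (simp add: coord_zero)
  qed
  thus ?thesis using eq_iff_coord_eq[of "u T0" 0] by (simp add: coord_zero)
qed

lemma internal_direct_sum_U_T: "internal_direct_sum scale (RYT la) U UNIV"
  unfolding internal_direct_sum_def using span_U_T U_T_independent by blast

end

theorem mainTheorem9: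
  fixes scale :: "K \<Rightarrow> 'v::ab_group_add \<Rightarrow> 'v"
    and n :: nat and la :: "nat list"
    and Top th X :: "nat \<Rightarrow> 'v \<Rightarrow> 'v"
    and F :: "(nat \<times> nat \<Rightarrow> nat \<times> nat) \<Rightarrow> 'v"
  assumes "1 \<le> n"
    and "is_partition la n"
    and "V_lambda_data scale n la Top th X F"
  shows "internal_direct_sum scale (RYT la) (U_T scale n la F) UNIV
     \<and> (\<forall>T\<in>RYT la. An_irreducible scale n Top th (U_T scale n la F T))"
proof -
  interpret V_lambda scale n la Top th X F
    using assms(2,3) by unfold_locales
  show ?thesis using internal_direct_sum_U_T An_irreducible_U_T by blast
qed

end
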